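(* Let $\mathcal{X},\mathcal{Y},\mathcal{U},\mathcal{Z}$ be finite sets, let $(X,Y)\in\mathcal{X}\times\mathcal{Y}$ have joint distribution $P_{X,Y}$ with $P_X$ and $P_Y$ of full support, and let $f:\mathcal{X}\times\mathcal{Y}\to\mathcal{U}$ and $g:\mathcal{Y}\to\mathcal{Z}$ be deterministic. Assume the "pairwise shared side information" condition: for all $z\in\mathcal{Z}$ and all $x,x'\in\mathcal{X}$ there exists $y\in\mathcal{Y}$ with $g(y)=z$ and $P_{X,Y}(x,y)P_{X,Y}(x',y)>0$. Then the optimal zero-error rate satisfies $$R^*=\sum_{z\in\mathcal{Z}}P_{g(Y)}(z)\,H_\kappa(G^f_z).$$
   Context: Setting: $(X^n,Y^n)$ denotes $n$ i.i.d. copies of $(X,Y)$. An encoder observes $X^n$ and $(g(Y_t))_{t\le n}$; a decoder observes $Y^n$ and must recover $(f(X_t,Y_t))_{t\le n}$. An $(n,R_n)$-zero-error source code is a pair $\phi_e:\mathcal{X}^n\times\mathcal{Z}^n\to\{0,1\}^*$, $\phi_d:\mathcal{Y}^n\times\{0,1\}^*\to\mathcal{U}^n$ such that $\phi_e(\mathcal{X}^n\times\mathcal{Z}^n)$ is prefix-free, $R_n=\frac1n\mathbb{E}[l(\phi_e(X^n,(g(Y_t))_{t\le n}))]$ ($l$ = word length), and for all $(x^n,y^n)\in\operatorname{supp}P^n_{X,Y}$, $\phi_d(y^n,\phi_e(x^n,(g(y_t))_{t\le n}))=(f(x_t,y_t))_{t\le n}$. A rate $R$ is achievable if some sequence of $(n,R_n)$-zero-error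 codes has $\lim_n R_n=R$; $R^*$ is the infimum of achievable rates. A probabilistic graph is $(\mathcal{V},\mathcal{E},P_V)$ with a distribution $P_V$ on the vertices; a set of vertices is independent if no two of its vertices are adjacent. For a probabilistic graph $G$, let $\Gamma(G)$ be its collection of independent sets; the Körner graph entropy is $H_\kappa(G)=\min I(W;V)$, where $V\sim P_V$ and the minimum is over all conditional distributions $P_{W|V}$ of a random variable $W$ taking values in $\Gamma(G)$ such that $V\in W$ with probability one. For $z\in\mathcal{Z}$, the auxiliary graph $G^f_z$ has vertex set $\mathcal{X}$ with distribution $P_{X|g(Y)=z}$, and $x,x'$ are adjacent iff there is $y\in\mathcal{Y}$ with $g(y)=z$, $P_{X,Y}(x,y)>0$, $P_{X,Y}(x',y)>0$ and $f(x,y)\ne f(x',y)$. *)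

theory Defs
  imports Complex_Main "HOL-Library.Sublist"
begin

text \<open>A probabilistic graph on a finite vertex type is given by a vertex
distribution pv and a (symmetric) adjacency relation adj.\<close>

definition indep_set :: "('v \<Rightarrow> 'v \<Rightarrow> bool) \<Rightarrow> 'v set \<Rightarrow> bool" where
  "indep_set adj S \<longleftrightarrow> (\<forall>a\<in>S. \<forall>b\<in>S. \<not> adj a b)"

text \<open>Mutual information I(W;V) in bits, where V has law pv and W given V
has law Q v (a distribution on vertex sets). Terms with zero probability
contribute 0.\<close>

definition mutual_info :: "('v::finite \<Rightarrow> real) \<Rightarrow> ('v \<Rightarrow> 'v set \<Rightarrow> real) \<Rightarrow> real" where
  "mutual_info pv Q =
     (\<Sum>v\<in>UNIV. \<Sum>W\<in>UNIV.
        if pv v * Q v W = 0 then 0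
        else pv v * Q v W * log 2 (Q v W / (\<Sum>v'\<in>UNIV. pv v' * Q v' W)))"

definition admissible_channel ::
  "('v::finite \<Rightarrow> real) \<Rightarrow> ('v \<Rightarrow> 'v \<Rightarrow> bool) \<Rightarrow> ('v \<Rightarrow> 'v set \<Rightarrow> real) \<Rightarrow> bool" where
  "admissible_channel pv adj Q \<longleftrightarrow>
     (\<forall>v W. 0 \<le> Q v W) \<and>
     (\<forall>v. (\<Sum>W\<in>UNIV. Q v W) = 1) \<and>
     (\<forall>v W. Q v W \<noteq> 0 \<longrightarrow> indep_set adj W) \<and>
     (\<forall>v W. 0 < pv v \<and> 0 < Q v W \<longrightarrow> v \<in> W)"

definition korner_entropy :: "('v::finite \<Rightarrow> real) \<Rightarrow> ('v \<Rightarrow> 'v \<Rightarrow> bool) \<Rightarrow> real" where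
  "korner_entropy pv adj = Inf (mutual_info pv ` {Q. admissible_channel pv adj Q})"

definition pgY :: "('x::finite \<Rightarrow> 'y::finite \<Rightarrow> real) \<Rightarrow> ('y \<Rightarrow> 'z) \<Rightarrow> 'z \<Rightarrow> real" where
  "pgY P g z = (\<Sum>x\<in>UNIV. \<Sum>y\<in>{y. g y = z}. P x y)"

definition cond_X :: "('x::finite \<Rightarrow> 'y::finite \<Rightarrow> real) \<Rightarrow> ('y \<Rightarrow> 'z) \<Rightarrow> 'z \<Rightarrow> 'x \<Rightarrow> real" where
  "cond_X P g z x = (\<Sum>y\<in>{y. g y = z}. P x y) / pgY P g z"

definition aux_adj :: "('x \<Rightarrow> 'y \<Rightarrow> real) \<Rightarrow> ('x \<Rightarrow> 'y \<Rightarrow> 'u) \<Rightarrow> ('y \<Rightarrow> 'z) \<Rightarrow> 'z \<Rightarrow> 'x \<Rightarrow> 'x \<Rightarrow> bool" where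
  "aux_adj P f g z x x' \<longleftrightarrow>
     (\<exists>y. g y = z \<and> 0 < P x y \<and> 0 < P x' y \<and> f x y \<noteq> f x' y)"

definition prob_n :: "('x \<Rightarrow> 'y \<Rightarrow> real) \<Rightarrow> nat \<Rightarrow> 'x list \<Rightarrow> 'y list \<Rightarrow> real" where
  "prob_n P n xs ys = (\<Prod>t<n. P (xs ! t) (ys ! t))"

definition zero_error_code ::
  "('x \<Rightarrow> 'y \<Rightarrow> real) \<Rightarrow> ('x \<Rightarrow> 'y \<Rightarrow> 'u) \<Rightarrow> ('y \<Rightarrow> 'z) \<Rightarrow> nat
   \<Rightarrow> ('x list \<Rightarrow> 'z list \<Rightarrow> bool list) \<Rightarrow> ('y list \<Rightarrow> bool list \<Rightarrow> 'u list) \<Rightarrow> bool" where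
  "zero_error_code P f g n enc dec \<longleftrightarrow>
     (\<forall>xs zs xs' zs'. length xs = n \<and> length zs = n \<and> length xs' = n \<and> length zs' = n \<longrightarrow>
        prefix (enc xs zs) (enc xs' zs') \<longrightarrow> enc xs zs = enc xs' zs') \<and>
     (\<forall>xs ys. length xs = n \<and> length ys = n \<and> 0 < prob_n P n xs ys \<longrightarrow>
        dec ys (enc xs (map g ys)) = map2 f xs ys)"

definition code_rate ::
  "('x::finite \<Rightarrow> 'y::finite \<Rightarrow> real) \<Rightarrow> ('y \<Rightarrow> 'z) \<Rightarrow> nat \<Rightarrow> ('x list \<Rightarrow> 'z list \<Rightarrow> bool list) \<Rightarrow> real" where
  "code_rate P g n enc =
     (1 / real n) * (\<Sum>(xs, ys)\<in>{xs. length xs = n} \<times> {ys. length ys = n}.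
        prob_n P n xs ys * real (length (enc xs (map g ys))))"

definition achievable ::
  "('x::finite \<Rightarrow> 'y::finite \<Rightarrow> real) \<Rightarrow> ('x \<Rightarrow> 'y \<Rightarrow> 'u) \<Rightarrow> ('y \<Rightarrow> 'z) \<Rightarrow> real \<Rightarrow> bool" where
  "achievable P f g R \<longleftrightarrow>
     (\<exists>(enc :: nat \<Rightarrow> 'x list \<Rightarrow> 'z list \<Rightarrow> bool list) (dec :: nat \<Rightarrow> 'y list \<Rightarrow> bool list \<Rightarrow> 'u list).
        (\<forall>n\<ge>1. zero_error_code P f g n (enc n) (dec n)) \<and>
        (\<lambda>n. code_rate P g n (enc n)) \<longlonglongrightarrow> R)"

definition opt_rate ::
  "('x::finite \<Rightarrow> 'y::finite \<Rightarrow> real) \<Rightarrow> ('x \<Rightarrow> 'y \<Rightarrow> 'u) \<Rightarrow> ('y \<Rightarrow> 'z) \<Rightarrow> real" where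
  "opt_rate P f g = Inf {R. achievable P f g R}"

end

theory Submission
  imports Defs
begin

text \<open>
  Fix the side information z^n. Two source sequences sharing a codeword
  are non-adjacent in every graph G_{z_t}: by the pairwise condition both are
  plausible together with a common y^n, and adjacency at t would force the
  decoder to output two different values of f. Hence the set W_t of t-th letters
  of the sequences sharing the codeword of X^n is an independent set containing
  X_t, which makes X_t -> W_t an admissible channel, and
  sum_t I(X_t; W_t) <= H(codeword) <= expected length by Gibbs' and Kraft's
  inequalities. Averaging over z^n bounds every rate from below by
  sum_z P(z) H_kappa(G_z).

  Choose nearly optimal channels Q_z and draw about 2^(n(h+delta))
  codewords, each a sequence of independent sets, from their output laws, where
  h = E[-log a_{g(Y)}(X)] and a_z(x) is the probability that the output of Q_z
  contains x; by Gibbs' inequality h <= sum_z P(z) I(X; W | z). A typical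
  sequence is covered by a single codeword with probability at least
  2^(-n(h+delta)), so some codebook covers all of them. Typical sequences are
  sent as the index of a covering codeword, which the decoder can resolve
  because all its sets are independent, atypical ones verbatim; Chebyshev's
  inequality makes the latter negligible.
\<close>

section \<open>Sums over sequences and information inequalities\<close>

lemma finite_lists_length_UNIV: "finite {xs :: 'a::finite list. length xs = n}"
  using finite_lists_length_eq[of "UNIV :: 'a set" n] by simp

lemma sum_prod_nth_lists:
  fixes F :: "nat \<Rightarrow> 'a \<Rightarrow> 'b::comm_semiring_1"
  assumes "finite A"
  shows "(\<Sum>xs\<in>{xs. set xs \<subseteq> A \<and> length xs = n}. \<Prod>t<n. F t (xs!t)) = (\<Prod>t<n. \<Sum>x\<in>A. F t x)"
proof (induction n arbitrary: F)
  case 0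
  have "{xs. set xs \<subseteq> A \<and> length xs = 0} = {[]}" by auto
  then show ?case by simp
next
  case (Suc n)
  let ?L = "\<lambda>n. {xs. set xs \<subseteq> A \<and> length xs = n}"
  have cons_image: "?L (Suc n) = (\<lambda>(x, xs). x # xs) ` (A \<times> ?L n)"
    by (auto simp: length_Suc_conv image_iff)
  have inj: "inj_on (\<lambda>(x, xs). x # xs) (A \<times> ?L n)"
    by (auto simp: inj_on_def)
  have "(\<Sum>xs\<in>?L (Suc n). \<Prod>t<Suc n. F t (xs!t))
      = (\<Sum>(x, xs)\<in>A \<times> ?L n. \<Prod>t<Suc n. F t ((x # xs)!t))"
    unfolding cons_image by (subst sum.reindex[OF inj]) (simp add: case_prod_unfold)
  also have "\<dots> = (\<Sum>x\<in>A. \<Sum>xs\<in>?L n. F 0 x * (\<Prod>t<n. F (Suc t) (xs!t)))"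
    unfolding prod.lessThan_Suc_shift by (simp add: sum.cartesian_product[symmetric])
  also have "\<dots> = (\<Sum>x\<in>A. F 0 x * (\<Prod>t<n. \<Sum>x\<in>A. F (Suc t) x))"
    using Suc.IH[of "\<lambda>t. F (Suc t)"] by (simp add: sum_distrib_left[symmetric])
  also have "\<dots> = (\<Prod>t<Suc n. \<Sum>x\<in>A. F t x)"
    unfolding prod.lessThan_Suc_shift by (simp add: sum_distrib_right)
  finally show ?case .
qed

lemma sum_prod_nth_lists_UNIV:
  fixes F :: "nat \<Rightarrow> 'a::finite \<Rightarrow> 'b::comm_semiring_1"
  shows "(\<Sum>xs\<in>{xs. length xs = n}. \<Prod>t<n. F t (xs!t)) = (\<Prod>t<n. \<Sum>x\<in>UNIV. F t x)"
  using sum_prod_nth_lists[of UNIV F n] by simp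

lemma sum_prod_nth_lists2:
  fixes F :: "nat \<Rightarrow> 'a::finite \<Rightarrow> 'c::finite \<Rightarrow> 'b::comm_semiring_1"
  shows "(\<Sum>xs\<in>{xs. length xs = n}. \<Sum>ys\<in>{ys. length ys = n}. \<Prod>t<n. F t (xs!t) (ys!t))
     = (\<Prod>t<n. \<Sum>x\<in>UNIV. \<Sum>y\<in>UNIV. F t x y)"
proof -
  have "(\<Sum>ys\<in>{ys. length ys = n}. \<Prod>t<n. F t (xs!t) (ys!t)) = (\<Prod>t<n. \<Sum>y\<in>UNIV. F t (xs!t) y)" for xs
    by (rule sum_prod_nth_lists_UNIV)
  then show ?thesis by (simp add: sum_prod_nth_lists_UNIV[of "\<lambda>t x. \<Sum>y\<in>UNIV. F t x y"])
qed

lemma sum_prod_nth_marginal: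
  fixes p :: "nat \<Rightarrow> 'a::finite \<Rightarrow> real"
  assumes p_sum: "\<And>s. s < n \<Longrightarrow> (\<Sum>x\<in>UNIV. p s x) = 1" and t: "t < n"
  shows "(\<Sum>xs\<in>{xs. length xs = n}. if xs!t = x then \<Prod>s<n. p s (xs!s) else 0) = p t x"
proof -
  define G where "G s y = (if s = t then (if y = x then p s y else 0) else p s y)" for s y
  have "(if xs!t = x then \<Prod>s<n. p s (xs!s) else 0) = (\<Prod>s<n. G s (xs!s))" for xs
    using t by (auto simp: G_def intro!: prod.cong prod_zero bexI[of _ t])
  then have "(\<Sum>xs\<in>{xs. length xs = n}. if xs!t = x then \<Prod>s<n. p s (xs!s) else 0)
      = (\<Prod>s<n. \<Sum>y\<in>UNIV. G s y)" by (simp add: sum_prod_nth_lists_UNIV)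
  also have "\<dots> = (\<Prod>s<n. if s = t then p t x else 1)"
    by (rule prod.cong) (auto simp: G_def p_sum)
  finally show ?thesis using t by simp
qed

lemma sum_prod_nth_sum:
  fixes w K :: "'a::finite \<Rightarrow> real"
  assumes w_sum: "(\<Sum>z\<in>UNIV. w z) = 1"
  shows "(\<Sum>zs\<in>{zs. length zs = n}. (\<Prod>t<n. w (zs!t)) * (\<Sum>t<n. K (zs!t)))
     = real n * (\<Sum>z\<in>UNIV. w z * K z)"
proof -
  have marginal: "(\<Sum>zs\<in>{zs. length zs = n}. if zs!t = z then \<Prod>s<n. w (zs!s) else 0) = w z"
    if "t < n" for t z
    using sum_prod_nth_marginal[of n "\<lambda>_. w", OF w_sum that] by simp
  have "(\<Sum>zs\<in>{zs. length zs = n}. (\<Prod>s<n. w (zs!s)) * K (zs!t)) = (\<Sum>z\<in>UNIV. w z * K z)"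
    if "t < n" for t
  proof -
    have "(\<Sum>zs\<in>{zs. length zs = n}. (\<Prod>s<n. w (zs!s)) * K (zs!t))
        = (\<Sum>zs\<in>{zs. length zs = n}. \<Sum>z\<in>UNIV. if zs!t = z then (\<Prod>s<n. w (zs!s)) * K z else 0)"
      by (simp add: sum.delta')
    also have "\<dots> = (\<Sum>z\<in>UNIV. (\<Sum>zs\<in>{zs. length zs = n}. if zs!t = z then \<Prod>s<n. w (zs!s) else 0) * K z)"
      by (subst sum.swap) (auto simp: sum_distrib_right intro!: sum.cong)
    also have "\<dots> = (\<Sum>z\<in>UNIV. w z * K z)"
      by (simp add: marginal[OF that])
    finally show ?thesis .
  qed
  then have "(\<Sum>t<n. \<Sum>zs\<in>{zs. length zs = n}. (\<Prod>s<n. w (zs!s)) * K (zs!t))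
      = real n * (\<Sum>z\<in>UNIV. w z * K z)" by simp
  then show ?thesis
    by (simp add: sum_distrib_left sum.swap[of _ "{..<n}"])
qed

lemma prod_pos_imp_factor_pos:
  fixes f :: "'a \<Rightarrow> 'b::linordered_idom"
  assumes "finite A" "\<And>a. a \<in> A \<Longrightarrow> 0 \<le> f a" "0 < prod f A" "a \<in> A"
  shows "0 < f a"
proof (rule ccontr)
  assume "\<not> 0 < f a"
  then have "f a = 0" using assms(2)[OF assms(4)] by simp
  then have "prod f A = 0" using assms(1,4) by (intro prod_zero) auto
  then show False using assms(3) by simp
qed

lemma sum_if_conj_eq:
  fixes F :: "'a::finite \<Rightarrow> 'b::comm_monoid_add"
  shows "(\<Sum>u\<in>UNIV. if A \<and> a = u then F u else 0) = (if A then F a else 0)"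
  by (cases A) simp_all

lemma sum_swap_pairs:
  "(\<Sum>a\<in>A. \<Sum>b\<in>B. \<Sum>c\<in>C. \<Sum>d\<in>D. F a b c d) = (\<Sum>c\<in>C. \<Sum>d\<in>D. \<Sum>a\<in>A. \<Sum>b\<in>B. F a b c d)"
proof -
  have "(\<Sum>a\<in>A. \<Sum>b\<in>B. \<Sum>c\<in>C. \<Sum>d\<in>D. F a b c d) = (\<Sum>a\<in>A. \<Sum>c\<in>C. \<Sum>d\<in>D. \<Sum>b\<in>B. F a b c d)"
    by (intro sum.cong refl) (subst sum.swap, intro sum.cong refl sum.swap)
  also have "\<dots> = (\<Sum>c\<in>C. \<Sum>d\<in>D. \<Sum>a\<in>A. \<Sum>b\<in>B. F a b c d)"
    by (subst sum.swap, intro sum.cong refl sum.swap)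
  finally show ?thesis .
qed

lemma sum_weighted_support:
  fixes w F :: "'a \<Rightarrow> real"
  assumes "finite L" "\<And>a. a \<in> L \<Longrightarrow> 0 \<le> w a"
  shows "(\<Sum>a\<in>L. w a * F a) = (\<Sum>a\<in>{a\<in>L. 0 < w a}. w a * F a)"
  using assms by (intro sum.mono_neutral_right) (auto simp: less_le)

lemma log_prod:
  assumes "finite I" "\<And>i. i \<in> I \<Longrightarrow> f i \<noteq> 0"
  shows "log b (prod f I) = (\<Sum>i\<in>I. log b (f i))"
  using ln_prod[OF assms] by (simp add: log_def sum_divide_distrib)

lemma gibbs_inequality:
  fixes a b :: "'i \<Rightarrow> real"
  assumes "finite S" "\<And>i. i \<in> S \<Longrightarrow> 0 < a i" "\<And>i. i \<in> S \<Longrightarrow> 0 < b i"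
    and "sum b S \<le> sum a S"
  shows "0 \<le> (\<Sum>i\<in>S. a i * log 2 (a i / b i))"
proof -
  have "a i - b i \<le> a i * ln (a i / b i)" if "i \<in> S" for i
  proof -
    have ai: "0 < a i" and bi: "0 < b i" using assms that by auto
    have "ln (b i / a i) \<le> b i / a i - 1" using ai bi by (intro ln_le_minus_one) simp
    then have "a i * (1 - b i / a i) \<le> a i * ln (a i / b i)"
      using ai bi by (intro mult_left_mono) (auto simp: ln_div)
    then show ?thesis using ai by (simp add: algebra_simps)
  qed
  then have "sum a S - sum b S \<le> (\<Sum>i\<in>S. a i * ln (a i / b i))"
    unfolding sum_subtractf[symmetric] by (rule sum_mono)
  then have "0 \<le> (\<Sum>i\<in>S. a i * ln (a i / b i)) / ln 2"
    using assms(4) by simp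
  then show ?thesis by (simp add: log_def sum_divide_distrib)
qed

lemma kraft_inequality:
  fixes S :: "bool list set"
  assumes fin: "finite S" and prefix_free: "\<And>a b. a \<in> S \<Longrightarrow> b \<in> S \<Longrightarrow> prefix a b \<Longrightarrow> a = b"
  shows "(\<Sum>w\<in>S. (1/2::real) ^ length w) \<le> 1"
proof (cases "S = {}")
  case False
  define M where "M = Max (length ` S)"
  have len_le: "length w \<le> M" if "w \<in> S" for w using fin that unfolding M_def by auto
  define E where "E w = (\<lambda>u. w @ u) ` {u::bool list. length u = M - length w}" for w
  have card_E: "card (E w) = 2 ^ (M - length w)" for w
    unfolding E_def by (subst card_image) (auto simp: inj_on_def card_lists_length_eq[of UNIV, simplified])
  have finite_E: "finite (E w)" for w
    unfolding E_def using finite_lists_length_UNIV by blast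
  have E_disjoint: "E a \<inter> E b = {}" if "a \<in> S" "b \<in> S" "a \<noteq> b" for a b
  proof (rule ccontr)
    assume "E a \<inter> E b \<noteq> {}"
    then obtain v where "prefix a v" "prefix b v" unfolding E_def by (auto simp: prefix_def)
    then have "prefix a b \<or> prefix b a" using prefix_same_cases by blast
    then show False using prefix_free that by metis
  qed
  have "(\<Sum>w\<in>S. card (E w)) = card (\<Union>w\<in>S. E w)"
    using E_disjoint by (subst card_UN_disjoint) (auto simp: fin finite_E)
  also have "\<dots> \<le> card {v::bool list. length v = M}"
    by (rule card_mono[OF finite_lists_length_UNIV]) (use len_le in \<open>auto simp: E_def\<close>)
  finally have "(\<Sum>w\<in>S. (2::nat) ^ (M - length w)) \<le> 2 ^ M"
    by (simp add: card_E card_lists_length_eq[of UNIV, simplified])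
  then have "real (\<Sum>w\<in>S. (2::nat) ^ (M - length w)) \<le> real (2 ^ M)"
    by (simp only: of_nat_le_iff)
  then have le: "(\<Sum>w\<in>S. (2::real) ^ (M - length w)) \<le> 2 ^ M"
    by (simp add: of_nat_sum)
  have "(1/2::real) ^ length w = 2 ^ (M - length w) / 2 ^ M" if "w \<in> S" for w
    using len_le[OF that] by (simp add: power_one_over power_diff)
  then have "(\<Sum>w\<in>S. (1/2::real) ^ length w) = (\<Sum>w\<in>S. (2::real) ^ (M - length w)) / 2 ^ M"
    by (simp add: sum_divide_distrib)
  also have "\<dots> \<le> 1" using le by simp
  finally show ?thesis .
qed simp

lemma kraft_inequality_cells:
  fixes pr :: "'a \<Rightarrow> real" and c :: "'a \<Rightarrow> bool list"
  assumes fin: "finite L"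
    and prefix_free: "\<And>a b. a \<in> L \<Longrightarrow> b \<in> L \<Longrightarrow> prefix (c a) (c b) \<Longrightarrow> c a = c b"
  shows "(\<Sum>a\<in>L. pr a * (1/2) ^ length (c a) / sum pr {b\<in>L. c b = c a}) \<le> 1"
proof -
  let ?K = "\<lambda>a. pr a * (1/2) ^ length (c a) / sum pr {b\<in>L. c b = c a}"
  have "(\<Sum>a\<in>L. ?K a) = (\<Sum>w\<in>c ` L. \<Sum>a\<in>{a\<in>L. c a = w}. ?K a)"
    by (rule sum.image_gen[OF fin])
  also have "\<dots> \<le> (\<Sum>w\<in>c ` L. (1/2) ^ length w)"
  proof (rule sum_mono)
    fix w
    have "(\<Sum>a\<in>{a\<in>L. c a = w}. ?K a)
        = (1/2) ^ length w * (\<Sum>a\<in>{a\<in>L. c a = w}. pr a / sum pr {b\<in>L. c b = w})"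
      unfolding sum_distrib_left by (intro sum.cong refl) auto
    also have "\<dots> \<le> (1/2) ^ length w"
      by (cases "sum pr {b\<in>L. c b = w} = 0") (simp_all add: sum_divide_distrib[symmetric])
    finally show "(\<Sum>a\<in>{a\<in>L. c a = w}. ?K a) \<le> (1/2) ^ length w" .
  qed
  also have "\<dots> \<le> 1"
    using fin prefix_free by (intro kraft_inequality) auto
  finally show ?thesis .
qed

lemma entropy_le_expected_length:
  fixes pr :: "'a \<Rightarrow> real" and c :: "'a \<Rightarrow> bool list"
  assumes fin: "finite L" and pr_nonneg: "\<And>a. a \<in> L \<Longrightarrow> 0 \<le> pr a" and pr_sum: "sum pr L = 1"
    and prefix_free: "\<And>a b. a \<in> L \<Longrightarrow> b \<in> L \<Longrightarrow> prefix (c a) (c b) \<Longrightarrow> c a = c b"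
  shows "(\<Sum>a\<in>L. pr a * - log 2 (sum pr {b\<in>L. c b = c a})) \<le> (\<Sum>a\<in>L. pr a * length (c a))"
proof -
  define S where "S = {a\<in>L. 0 < pr a}"
  define r where "r a = sum pr {b\<in>L. c b = c a}" for a
  define K where "K a = pr a * (1/2) ^ length (c a) / r a" for a
  have r_pos: "0 < r a" if "a \<in> S" for a
    using that fin pr_nonneg member_le_sum[of a "{b\<in>L. c b = c a}" pr]
    unfolding S_def r_def by force
  have on_S: "(\<Sum>a\<in>L. pr a * F a) = (\<Sum>a\<in>S. pr a * F a)" for F
    unfolding S_def using fin pr_nonneg by (rule sum_weighted_support)
  have "sum K S \<le> sum K L"
    using fin pr_nonneg
    by (intro sum_mono2) (auto simp: S_def K_def r_def intro!: divide_nonneg_nonneg sum_nonneg)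
  also have "\<dots> \<le> sum pr S"
    using kraft_inequality_cells[OF fin prefix_free] pr_sum on_S[of "\<lambda>_. 1"]
    by (simp add: K_def r_def)
  finally have "sum K S \<le> sum pr S" .
  then have "0 \<le> (\<Sum>a\<in>S. pr a * log 2 (pr a / K a))"
    using fin r_pos by (intro gibbs_inequality) (auto simp: S_def K_def)
  also have "\<dots> = (\<Sum>a\<in>S. pr a * (log 2 (r a) + length (c a)))"
  proof (intro sum.cong refl)
    fix a assume a: "a \<in> S"
    have "pr a / K a = r a * 2 ^ length (c a)"
      using a r_pos[OF a] unfolding K_def S_def by (simp add: field_simps power_one_over)
    then show "pr a * log 2 (pr a / K a) = pr a * (log 2 (r a) + length (c a))"
      using r_pos[OF a] by (simp add: log_mult_pos log_nat_power)
  qed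
  finally have "(\<Sum>a\<in>S. pr a * - log 2 (r a)) \<le> (\<Sum>a\<in>S. pr a * length (c a))"
    by (simp add: distrib_left sum.distrib sum_negf)
  then show ?thesis by (simp only: on_S r_def)
qed

section \<open>Channels into independent sets\<close>

definition channel_output :: "('v::finite \<Rightarrow> real) \<Rightarrow> ('v \<Rightarrow> 'v set \<Rightarrow> real) \<Rightarrow> 'v set \<Rightarrow> real" where
  "channel_output pv Q W = (\<Sum>v\<in>UNIV. pv v * Q v W)"

definition cover_prob :: "('v::finite \<Rightarrow> real) \<Rightarrow> ('v \<Rightarrow> 'v set \<Rightarrow> real) \<Rightarrow> 'v \<Rightarrow> real" where
  "cover_prob pv Q v = (\<Sum>W\<in>{W. v \<in> W}. channel_output pv Q W)"

locale vertex_distribution =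
  fixes pv :: "'v::finite \<Rightarrow> real"
  assumes pv_nonneg: "\<And>v. 0 \<le> pv v" and pv_sum: "(\<Sum>v\<in>UNIV. pv v) = 1"
begin

context
  fixes adj :: "'v \<Rightarrow> 'v \<Rightarrow> bool" and Q :: "'v \<Rightarrow> 'v set \<Rightarrow> real"
  assumes admissible: "admissible_channel pv adj Q"
begin

lemma Q_nonneg: "0 \<le> Q v W"
  and Q_sum: "(\<Sum>W\<in>UNIV. Q v W) = 1"
  and Q_indep: "Q v W \<noteq> 0 \<Longrightarrow> indep_set adj W"
  and Q_mem: "0 < pv v \<Longrightarrow> 0 < Q v W \<Longrightarrow> v \<in> W"
  using admissible unfolding admissible_channel_def by auto

lemma channel_output_nonneg: "0 \<le> channel_output pv Q W"
  unfolding channel_output_def by (intro sum_nonneg mult_nonneg_nonneg pv_nonneg Q_nonneg)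

lemma channel_output_ge: "pv v * Q v W \<le> channel_output pv Q W"
  unfolding channel_output_def
  by (rule member_le_sum) (auto intro: mult_nonneg_nonneg pv_nonneg Q_nonneg)

lemma sum_channel_output: "(\<Sum>W\<in>UNIV. channel_output pv Q W) = 1"
  unfolding channel_output_def
  by (subst sum.swap) (simp add: sum_distrib_left[symmetric] Q_sum pv_sum)

lemma indep_set_if_channel_output_pos:
  assumes "0 < channel_output pv Q W"
  shows "indep_set adj W"
proof (rule ccontr)
  assume "\<not> indep_set adj W"
  then have "Q v W = 0" for v using Q_indep by blast
  then show False using assms by (simp add: channel_output_def)
qed

lemma cover_prob_nonneg: "0 \<le> cover_prob pv Q v"
  unfolding cover_prob_def by (intro sum_nonneg channel_output_nonneg)

lemma cover_prob_le_1: "cover_prob pv Q v \<le> 1"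
proof -
  have "cover_prob pv Q v \<le> (\<Sum>W\<in>UNIV. channel_output pv Q W)"
    unfolding cover_prob_def by (rule sum_mono2) (auto intro: channel_output_nonneg)
  then show ?thesis by (simp add: sum_channel_output)
qed

lemma cover_prob_pos:
  assumes "0 < pv v"
  shows "0 < cover_prob pv Q v"
proof -
  have "\<exists>W. Q v W \<noteq> 0" using Q_sum[of v] by (metis sum.neutral zero_neq_one)
  then obtain W where W: "0 < Q v W" using Q_nonneg[of v] by (metis less_eq_real_def)
  have "0 < pv v * Q v W" using assms W by simp
  also have "\<dots> \<le> channel_output pv Q W" by (rule channel_output_ge)
  also have "\<dots> \<le> cover_prob pv Q v"
    unfolding cover_prob_def
    by (rule member_le_sum) (use Q_mem[OF assms W] channel_output_nonneg in auto)
  finally show ?thesis .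
qed

lemma mutual_info_nonneg: "0 \<le> mutual_info pv Q"
proof -
  define S where "S = {(v, W). pv v * Q v W \<noteq> 0}"
  define a where "a vW = pv (fst vW) * Q (fst vW) (snd vW)" for vW
  define b where "b vW = pv (fst vW) * channel_output pv Q (snd vW)" for vW
  have a_pos: "0 < a vW" if "vW \<in> S" for vW
    using that pv_nonneg Q_nonneg unfolding S_def a_def by (auto simp: less_le)
  have b_pos: "0 < b vW" if "vW \<in> S" for vW
  proof -
    have "0 < pv (fst vW)" using that pv_nonneg Q_nonneg unfolding S_def by (auto simp: less_le)
    moreover have "a vW \<le> channel_output pv Q (snd vW)" unfolding a_def by (rule channel_output_ge)
    ultimately show ?thesis using a_pos[OF that] unfolding b_def by simp
  qed
  have sum_a: "sum a S = 1"
  proof -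
    have "sum a S = sum a UNIV"
      by (rule sum.mono_neutral_left) (auto simp: S_def a_def)
    also have "\<dots> = 1"
      unfolding a_def UNIV_Times_UNIV[symmetric] sum.cartesian_product'
      by (simp add: sum_distrib_left[symmetric] Q_sum pv_sum)
    finally show ?thesis .
  qed
  have "sum b S \<le> (\<Sum>(v, W)\<in>UNIV. pv v * channel_output pv Q W)"
    unfolding b_def case_prod_unfold
    by (rule sum_mono2) (auto intro!: mult_nonneg_nonneg pv_nonneg channel_output_nonneg)
  also have "\<dots> = 1"
    unfolding UNIV_Times_UNIV[symmetric] sum.cartesian_product'
    by (simp add: sum_distrib_left[symmetric] sum_channel_output pv_sum)
  finally have sum_b: "sum b S \<le> 1" .
  have "0 \<le> (\<Sum>vW\<in>S. a vW * log 2 (a vW / b vW))"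
    using a_pos b_pos sum_a sum_b by (intro gibbs_inequality) (auto simp: S_def)
  also have "\<dots> = (\<Sum>(v, W)\<in>UNIV. if pv v * Q v W = 0 then 0
             else pv v * Q v W * log 2 (Q v W / channel_output pv Q W))"
    by (rule sum.mono_neutral_cong_left) (auto simp: S_def a_def b_def)
  also have "\<dots> = mutual_info pv Q"
    unfolding mutual_info_def channel_output_def[symmetric] UNIV_Times_UNIV[symmetric]
      sum.cartesian_product' by simp
  finally show ?thesis .
qed

lemma neg_log_cover_prob_le:
  assumes pv_pos: "0 < pv v"
  shows "- log 2 (cover_prob pv Q v)
    \<le> (\<Sum>W\<in>{W. Q v W \<noteq> 0}. Q v W * log 2 (Q v W / channel_output pv Q W))"
proof -
  let ?out = "channel_output pv Q" and ?S = "{W. Q v W \<noteq> 0}"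
  have Q_pos: "0 < Q v W" if "W \<in> ?S" for W using that Q_nonneg[of v W] by simp
  have out_pos: "0 < ?out W" if "W \<in> ?S" for W
    using mult_pos_pos[OF pv_pos Q_pos[OF that]] channel_output_ge[of v W] by linarith
  have "sum (Q v) ?S = sum (Q v) UNIV" by (rule sum.mono_neutral_left) auto
  then have sum_Q: "sum (Q v) ?S = 1" by (simp add: Q_sum)
  define s where "s = sum ?out ?S"
  have "?S \<noteq> {}" using sum_Q by (metis sum.empty zero_neq_one)
  then have s_pos: "0 < s"
    unfolding s_def using out_pos by (intro sum_pos) auto
  have s_le: "s \<le> cover_prob pv Q v"
    unfolding s_def cover_prob_def
    by (rule sum_mono2) (use Q_mem[OF pv_pos] Q_pos channel_output_nonneg in auto)
  \<comment> \<open>Gibbs against the output law conditioned on the support of Q v\<close>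
  have "0 \<le> (\<Sum>W\<in>?S. Q v W * log 2 (Q v W / (?out W / s)))"
    using s_pos sum_Q Q_pos out_pos
    by (intro gibbs_inequality) (auto simp: sum_divide_distrib[symmetric] s_def)
  also have "\<dots> = (\<Sum>W\<in>?S. Q v W * log 2 (Q v W / ?out W)) + log 2 s"
  proof -
    have "log 2 (Q v W / (?out W / s)) = log 2 (Q v W / ?out W) + log 2 s" if "W \<in> ?S" for W
    proof -
      have "Q v W / (?out W / s) = Q v W / ?out W * s" by simp
      moreover have "log 2 (Q v W / ?out W * s) = log 2 (Q v W / ?out W) + log 2 s"
        using Q_pos[OF that] out_pos[OF that] s_pos by (intro log_mult_pos) auto
      ultimately show ?thesis by simp
    qed
    then show ?thesis by (simp add: distrib_left sum.distrib sum_distrib_right[symmetric] sum_Q)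
  qed
  moreover have "log 2 s \<le> log 2 (cover_prob pv Q v)" using s_pos s_le by simp
  ultimately show ?thesis by linarith
qed

lemma cover_entropy_le_mutual_info:
  "(\<Sum>v\<in>UNIV. pv v * - log 2 (cover_prob pv Q v)) \<le> mutual_info pv Q"
proof -
  let ?out = "channel_output pv Q"
  have "pv v * - log 2 (cover_prob pv Q v) \<le> (\<Sum>W\<in>UNIV. if pv v * Q v W = 0 then 0
        else pv v * Q v W * log 2 (Q v W / ?out W))" for v
  proof (cases "pv v = 0")
    case False
    then have pv_pos: "0 < pv v" using pv_nonneg[of v] by simp
    then have "pv v * - log 2 (cover_prob pv Q v)
        \<le> pv v * (\<Sum>W\<in>{W. Q v W \<noteq> 0}. Q v W * log 2 (Q v W / ?out W))"
      by (intro mult_left_mono neg_log_cover_prob_le) auto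
    also have "\<dots> = (\<Sum>W\<in>UNIV. if pv v * Q v W = 0 then 0 else pv v * Q v W * log 2 (Q v W / ?out W))"
      unfolding sum_distrib_left by (rule sum.mono_neutral_cong_left) (auto simp: False)
    finally show ?thesis .
  qed simp
  then show ?thesis
    unfolding mutual_info_def channel_output_def[symmetric] by (rule sum_mono)
qed

end

lemma bdd_below_mutual_info: "bdd_below (mutual_info pv ` {Q. admissible_channel pv adj Q})"
proof (rule bdd_belowI)
  fix m assume "m \<in> mutual_info pv ` {Q. admissible_channel pv adj Q}"
  then show "0 \<le> m" using mutual_info_nonneg by blast
qed

lemma korner_entropy_le:
  assumes "admissible_channel pv adj Q"
  shows "korner_entropy pv adj \<le> mutual_info pv Q"
  unfolding korner_entropy_def by (intro cInf_lower imageI CollectI assms bdd_below_mutual_info)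

lemma exists_channel_near_korner_entropy:
  assumes irreflexive: "\<And>v. \<not> adj v v" and "0 < e"
  shows "\<exists>Q. admissible_channel pv adj Q \<and> mutual_info pv Q < korner_entropy pv adj + e"
proof -
  have "admissible_channel pv adj (\<lambda>v W. if W = {v} then 1 else 0)"
    unfolding admissible_channel_def indep_set_def using irreflexive by (auto split: if_splits)
  then have "mutual_info pv ` {Q. admissible_channel pv adj Q} \<noteq> {}" by auto
  moreover note bdd_below_mutual_info
  moreover have "Inf (mutual_info pv ` {Q. admissible_channel pv adj Q}) < korner_entropy pv adj + e"
    using \<open>0 < e\<close> by (simp add: korner_entropy_def)
  ultimately show ?thesis by (subst (asm) cInf_less_iff) auto
qed

end

section \<open>The converse for product sources\<close>

locale product_source =
  fixes n :: nat and p :: "nat \<Rightarrow> 'x::finite \<Rightarrow> real"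
  assumes p_nonneg: "\<And>t x. 0 \<le> p t x" and p_sum: "\<And>t. t < n \<Longrightarrow> (\<Sum>x\<in>UNIV. p t x) = 1"
begin

definition seqs :: "'x list set" where
  "seqs = {xs. length xs = n}"

definition prob :: "'x list \<Rightarrow> real" where
  "prob xs = (\<Prod>t<n. p t (xs!t))"

definition support :: "'x list set" where
  "support = {xs\<in>seqs. 0 < prob xs}"

lemma finite_seqs: "finite seqs"
  unfolding seqs_def by (rule finite_lists_length_UNIV)

lemma prob_nonneg: "0 \<le> prob xs"
  unfolding prob_def by (intro prod_nonneg) (auto intro: p_nonneg)

lemma sum_prob: "sum prob seqs = 1"
  unfolding seqs_def prob_def by (simp add: sum_prod_nth_lists_UNIV p_sum)

lemma sum_prob_nth: "t < n \<Longrightarrow> (\<Sum>xs\<in>seqs. if xs!t = x then prob xs else 0) = p t x"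
  unfolding seqs_def prob_def by (rule sum_prod_nth_marginal[OF p_sum])

lemma sum_prob_mult_support: "(\<Sum>xs\<in>seqs. prob xs * F xs) = (\<Sum>xs\<in>support. prob xs * F xs)"
  unfolding support_def using finite_seqs prob_nonneg by (rule sum_weighted_support)

lemma p_pos_if_support:
  assumes "xs \<in> support" "t < n"
  shows "0 < p t (xs!t)"
  using assms p_nonneg unfolding support_def prob_def
  by (intro prod_pos_imp_factor_pos[where f = "\<lambda>t. p t (xs!t)" and A = "{..<n}"]) auto

lemma vertex_distribution_p: "t < n \<Longrightarrow> vertex_distribution (p t)"
  by unfold_locales (auto intro: p_nonneg p_sum)

end

locale product_code = product_source n p for n and p :: "nat \<Rightarrow> 'x::finite \<Rightarrow> real" +
  fixes c :: "'x list \<Rightarrow> bool list"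
begin

definition cell :: "'x list \<Rightarrow> 'x list set" where
  "cell xs = {xs'\<in>seqs. c xs' = c xs}"

definition cell_prob :: "'x list \<Rightarrow> real" where
  "cell_prob xs = sum prob (cell xs)"

definition coord_set :: "nat \<Rightarrow> 'x list \<Rightarrow> 'x set" where
  "coord_set t xs = (\<lambda>xs'. xs'!t) ` cell xs"

definition joint :: "nat \<Rightarrow> 'x \<Rightarrow> 'x set \<Rightarrow> real" where
  "joint t x W = (\<Sum>xs\<in>seqs. if xs!t = x \<and> coord_set t xs = W then prob xs else 0)"

definition coord_law :: "nat \<Rightarrow> 'x set \<Rightarrow> real" where
  "coord_law t W = (\<Sum>x\<in>UNIV. joint t x W)"

text \<open>fiber_channel t is the conditional law of coord_set t X given X_t; where X_t
  has probability zero it is set to the empty set.\<close>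

definition fiber_channel :: "nat \<Rightarrow> 'x \<Rightarrow> 'x set \<Rightarrow> real" where
  "fiber_channel t x W = (if 0 < p t x then joint t x W / p t x else if W = {} then 1 else 0)"

lemma joint_nonneg: "0 \<le> joint t x W"
  unfolding joint_def by (intro sum_nonneg) (auto intro: prob_nonneg)

lemma sum_joint:
  assumes "t < n"
  shows "(\<Sum>W\<in>UNIV. joint t x W) = p t x"
proof -
  have "(\<Sum>W\<in>UNIV. joint t x W)
      = (\<Sum>xs\<in>seqs. \<Sum>W\<in>UNIV. if xs!t = x \<and> coord_set t xs = W then prob xs else 0)"
    unfolding joint_def by (rule sum.swap)
  also have "\<dots> = (\<Sum>xs\<in>seqs. if xs!t = x then prob xs else 0)"
    by (intro sum.cong refl) (simp add: sum.delta)
  finally show ?thesis using sum_prob_nth[OF assms] by simp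
qed

lemma joint_le_p:
  assumes "t < n"
  shows "joint t x W \<le> p t x"
proof -
  have "joint t x W \<le> (\<Sum>W\<in>UNIV. joint t x W)" by (rule member_le_sum) (auto intro: joint_nonneg)
  then show ?thesis using sum_joint[OF assms] by simp
qed

lemma joint_le_coord_law: "joint t x W \<le> coord_law t W"
  unfolding coord_law_def by (rule member_le_sum) (auto intro: joint_nonneg)

lemma coord_law_nonneg: "0 \<le> coord_law t W"
  unfolding coord_law_def by (intro sum_nonneg joint_nonneg)

lemma prob_le_joint:
  assumes "xs \<in> seqs"
  shows "prob xs \<le> joint t (xs!t) (coord_set t xs)"
proof -
  have "prob xs = (if xs!t = xs!t \<and> coord_set t xs = coord_set t xs then prob xs else 0)" by simp
  also have "\<dots> \<le> joint t (xs!t) (coord_set t xs)"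
    unfolding joint_def by (rule member_le_sum[OF assms]) (auto intro: prob_nonneg finite_seqs)
  finally show ?thesis .
qed

lemma prob_le_cell_prob: "xs \<in> seqs \<Longrightarrow> prob xs \<le> cell_prob xs"
  unfolding cell_prob_def cell_def using finite_seqs prob_nonneg by (intro member_le_sum) auto

lemma ex_seq_if_joint_nonzero:
  assumes "joint t x W \<noteq> 0"
  obtains xs where "xs \<in> seqs" "xs!t = x" "coord_set t xs = W"
proof -
  have "\<exists>xs\<in>seqs. xs!t = x \<and> coord_set t xs = W"
  proof (rule ccontr)
    assume "\<not> (\<exists>xs\<in>seqs. xs!t = x \<and> coord_set t xs = W)"
    then have "joint t x W = 0" unfolding joint_def by (intro sum.neutral) auto
    then show False using assms by simp
  qed
  then show ?thesis using that by blast
qed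

lemma p_mult_fiber_channel: "t < n \<Longrightarrow> p t x * fiber_channel t x W = joint t x W"
  using p_nonneg[of t x] joint_le_p[of t x W] joint_nonneg[of t x W]
  by (auto simp: fiber_channel_def)

lemma channel_output_fiber_channel: "t < n \<Longrightarrow> channel_output (p t) (fiber_channel t) = coord_law t"
  by (simp add: fun_eq_iff channel_output_def coord_law_def p_mult_fiber_channel)

lemma fiber_channel_admissible:
  assumes t: "t < n"
    and confusable: "\<And>xs xs'. xs \<in> seqs \<Longrightarrow> xs' \<in> seqs \<Longrightarrow> c xs = c xs' \<Longrightarrow> \<not> adj (xs!t) (xs'!t)"
  shows "admissible_channel (p t) adj (fiber_channel t)"
  unfolding admissible_channel_def
proof (intro conjI allI impI)
  fix x W
  show "0 \<le> fiber_channel t x W"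
    unfolding fiber_channel_def using joint_nonneg by (auto intro: divide_nonneg_pos)
  show "(\<Sum>W\<in>UNIV. fiber_channel t x W) = 1"
  proof (cases "0 < p t x")
    case True
    then show ?thesis
      using sum_joint[OF t, of x] by (simp add: fiber_channel_def sum_divide_distrib[symmetric])
  qed (simp add: fiber_channel_def)
next
  fix x W assume "fiber_channel t x W \<noteq> 0"
  then have "joint t x W \<noteq> 0 \<or> W = {}" by (auto simp: fiber_channel_def split: if_splits)
  then show "indep_set adj W"
  proof
    assume "joint t x W \<noteq> 0"
    then obtain xs where "xs \<in> seqs" "coord_set t xs = W" by (rule ex_seq_if_joint_nonzero)
    then show ?thesis
      using confusable unfolding indep_set_def coord_set_def cell_def by auto
  qed (simp add: indep_set_def)
next
  fix x W assume "0 < p t x \<and> 0 < fiber_channel t x W"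
  then have "joint t x W \<noteq> 0" by (auto simp: fiber_channel_def)
  then obtain xs where "xs \<in> seqs" "xs!t = x" "coord_set t xs = W" by (rule ex_seq_if_joint_nonzero)
  then show "x \<in> W" unfolding coord_set_def cell_def by force
qed

lemma support_pos:
  assumes "xs \<in> support"
  shows "0 < cell_prob xs" and "0 < joint t (xs!t) (coord_set t xs)"
    and "0 < coord_law t (coord_set t xs)"
  using assms prob_le_cell_prob[of xs] prob_le_joint[of xs t]
    joint_le_coord_law[of t "xs!t" "coord_set t xs"]
  unfolding support_def by auto

definition info_density :: "nat \<Rightarrow> 'x \<Rightarrow> 'x set \<Rightarrow> real" where
  "info_density t x W = (if joint t x W = 0 then 0 else log 2 (joint t x W / (p t x * coord_law t W)))"

lemma mutual_info_fiber_channel_joint: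
  assumes t: "t < n"
  shows "mutual_info (p t) (fiber_channel t) = (\<Sum>x\<in>UNIV. \<Sum>W\<in>UNIV. joint t x W * info_density t x W)"
  unfolding mutual_info_def channel_output_def[symmetric] channel_output_fiber_channel[OF t]
proof (intro sum.cong refl)
  fix x W
  show "(if p t x * fiber_channel t x W = 0 then 0 else p t x * fiber_channel t x W *
      log 2 (fiber_channel t x W / coord_law t W)) = joint t x W * info_density t x W"
  proof (cases "joint t x W = 0")
    case False
    then have "0 < p t x" using joint_le_p[OF t, of x W] joint_nonneg[of t x W] by simp
    then have "fiber_channel t x W / coord_law t W = joint t x W / (p t x * coord_law t W)"
      by (simp add: fiber_channel_def)
    then show ?thesis using False by (simp add: p_mult_fiber_channel[OF t] info_density_def)
  qed (simp add: p_mult_fiber_channel[OF t] info_density_def)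
qed

lemma mutual_info_fiber_channel:
  assumes t: "t < n"
  shows "mutual_info (p t) (fiber_channel t)
    = (\<Sum>xs\<in>support. prob xs *
         log 2 (joint t (xs!t) (coord_set t xs) / (p t (xs!t) * coord_law t (coord_set t xs))))"
proof -
  let ?d = "info_density t"
  have "mutual_info (p t) (fiber_channel t) = (\<Sum>x\<in>UNIV. \<Sum>W\<in>UNIV. \<Sum>xs\<in>seqs.
      if xs!t = x \<and> coord_set t xs = W then prob xs * ?d x W else 0)"
    unfolding mutual_info_fiber_channel_joint[OF t] joint_def sum_distrib_right
    by (intro sum.cong refl) auto
  also have "\<dots> = (\<Sum>x\<in>UNIV. \<Sum>xs\<in>seqs. \<Sum>W\<in>UNIV.
      if xs!t = x \<and> coord_set t xs = W then prob xs * ?d x W else 0)"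
    by (intro sum.cong refl sum.swap)
  also have "\<dots> = (\<Sum>xs\<in>seqs. \<Sum>x\<in>UNIV. \<Sum>W\<in>UNIV.
      if xs!t = x \<and> coord_set t xs = W then prob xs * ?d x W else 0)"
    by (rule sum.swap)
  also have "\<dots> = (\<Sum>xs\<in>support. prob xs * ?d (xs!t) (coord_set t xs))"
    by (simp add: sum_if_conj_eq sum_prob_mult_support)
  also have "\<dots> = (\<Sum>xs\<in>support. prob xs *
      log 2 (joint t (xs!t) (coord_set t xs) / (p t (xs!t) * coord_law t (coord_set t xs))))"
  proof (intro sum.cong refl)
    fix xs assume "xs \<in> support"
    then show "prob xs * ?d (xs!t) (coord_set t xs) = prob xs *
        log 2 (joint t (xs!t) (coord_set t xs) / (p t (xs!t) * coord_law t (coord_set t xs)))"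
      using support_pos(2)[of xs t] by (simp add: info_density_def)
  qed
  finally show ?thesis .
qed

text \<open>Gibbs' inequality against this sub-probability weight bounds the sum of the
  coordinatewise mutual informations by the entropy of the codeword.\<close>

definition coord_weight :: "'x list \<Rightarrow> real" where
  "coord_weight xs =
     cell_prob xs * (\<Prod>t<n. joint t (xs!t) (coord_set t xs) / coord_law t (coord_set t xs))"

lemma coord_weight_nonneg: "0 \<le> coord_weight xs"
  unfolding coord_weight_def cell_prob_def
  by (intro mult_nonneg_nonneg sum_nonneg prod_nonneg divide_nonneg_nonneg prob_nonneg
      joint_nonneg coord_law_nonneg)

lemma coord_weight_pos:
  assumes "xs \<in> support"
  shows "0 < coord_weight xs"
  unfolding coord_weight_def using support_pos[OF assms]
  by (intro mult_pos_pos prod_pos divide_pos_pos) auto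

lemma sum_coord_weight_le_1: "sum coord_weight seqs \<le> 1"
proof -
  have cell_bound: "(\<Sum>xs\<in>{xs\<in>seqs. c xs = w}. coord_weight xs) \<le> sum prob {xs\<in>seqs. c xs = w}"
    for w
  proof -
    define R where "R = sum prob {xs\<in>seqs. c xs = w}"
    define V where "V t = (\<lambda>xs'. xs'!t) ` {xs\<in>seqs. c xs = w}" for t
    have R_nonneg: "0 \<le> R" unfolding R_def by (intro sum_nonneg prob_nonneg)
    have "(\<Sum>xs\<in>{xs\<in>seqs. c xs = w}. coord_weight xs)
        = (\<Sum>xs\<in>{xs\<in>seqs. c xs = w}. R * (\<Prod>t<n. joint t (xs!t) (V t) / coord_law t (V t)))"
      by (rule sum.cong) (auto simp: coord_weight_def cell_prob_def coord_set_def cell_def R_def V_def)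
    also have "\<dots> \<le> (\<Sum>xs\<in>seqs. R * (\<Prod>t<n. joint t (xs!t) (V t) / coord_law t (V t)))"
      using finite_seqs R_nonneg
      by (intro sum_mono2) (auto intro!: mult_nonneg_nonneg prod_nonneg divide_nonneg_nonneg
          joint_nonneg coord_law_nonneg)
    also have "\<dots> = R * (\<Prod>t<n. \<Sum>x\<in>UNIV. joint t x (V t) / coord_law t (V t))"
      unfolding sum_distrib_left[symmetric] seqs_def
      using sum_prod_nth_lists_UNIV[of "\<lambda>t x. joint t x (V t) / coord_law t (V t)" n] by simp
    also have "\<dots> \<le> R * 1"
    proof (intro mult_left_mono prod_le_1 conjI R_nonneg)
      fix t
      have "(\<Sum>x\<in>UNIV. joint t x (V t) / coord_law t (V t)) = coord_law t (V t) / coord_law t (V t)"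
        unfolding coord_law_def sum_divide_distrib ..
      then show "0 \<le> (\<Sum>x\<in>UNIV. joint t x (V t) / coord_law t (V t))"
        and "(\<Sum>x\<in>UNIV. joint t x (V t) / coord_law t (V t)) \<le> 1"
        using coord_law_nonneg[of t "V t"] by auto
    qed
    finally show ?thesis unfolding R_def by simp
  qed
  have "sum coord_weight seqs = (\<Sum>w\<in>c ` seqs. \<Sum>xs\<in>{xs\<in>seqs. c xs = w}. coord_weight xs)"
    by (rule sum.image_gen[OF finite_seqs])
  also have "\<dots> \<le> (\<Sum>w\<in>c ` seqs. sum prob {xs\<in>seqs. c xs = w})"
    by (intro sum_mono cell_bound)
  also have "\<dots> = sum prob seqs"
    by (rule sum.image_gen[symmetric, OF finite_seqs])
  finally show ?thesis by (simp add: sum_prob)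
qed

lemma log_prob_div_coord_weight:
  assumes xs: "xs \<in> support"
  shows "log 2 (prob xs / coord_weight xs) = - log 2 (cell_prob xs)
    - (\<Sum>t<n. log 2 (joint t (xs!t) (coord_set t xs) / (p t (xs!t) * coord_law t (coord_set t xs))))"
proof -
  let ?j = "\<lambda>t. joint t (xs!t) (coord_set t xs)" and ?q = "\<lambda>t. coord_law t (coord_set t xs)"
  have pos: "0 < p t (xs!t)" "0 < ?j t" "0 < ?q t" if "t < n" for t
    using p_pos_if_support[OF xs that] support_pos[OF xs] by auto
  have "(\<Prod>t<n. p t (xs!t) * ?q t / ?j t) = (\<Prod>t<n. p t (xs!t)) / (\<Prod>t<n. ?j t / ?q t)"
    unfolding prod_dividef[symmetric] by (intro prod.cong refl) simp
  then have "prob xs / coord_weight xs = (\<Prod>t<n. p t (xs!t) * ?q t / ?j t) / cell_prob xs"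
    unfolding prob_def coord_weight_def by (simp add: mult.commute)
  moreover have "0 < (\<Prod>t<n. p t (xs!t) * ?q t / ?j t)" using pos by (intro prod_pos) auto
  ultimately have "log 2 (prob xs / coord_weight xs)
      = log 2 (\<Prod>t<n. p t (xs!t) * ?q t / ?j t) - log 2 (cell_prob xs)"
    using support_pos(1)[OF xs] by (simp only: log_divide_pos)
  also have "log 2 (\<Prod>t<n. p t (xs!t) * ?q t / ?j t) = (\<Sum>t<n. log 2 (p t (xs!t) * ?q t / ?j t))"
    using pos by (intro log_prod) (auto simp: less_le)
  also have "(\<Sum>t<n. log 2 (p t (xs!t) * ?q t / ?j t)) = - (\<Sum>t<n. log 2 (?j t / (p t (xs!t) * ?q t)))"
    unfolding sum_negf[symmetric] using pos by (intro sum.cong refl) (simp add: log_divide_pos)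
  finally show ?thesis by simp
qed

lemma sum_mutual_info_fiber_channel_le:
  "(\<Sum>t<n. mutual_info (p t) (fiber_channel t)) \<le> (\<Sum>xs\<in>seqs. prob xs * - log 2 (cell_prob xs))"
proof -
  let ?i = "\<lambda>xs. \<Sum>t<n. log 2 (joint t (xs!t) (coord_set t xs) / (p t (xs!t) * coord_law t (coord_set t xs)))"
  have mi: "(\<Sum>t<n. mutual_info (p t) (fiber_channel t)) = (\<Sum>xs\<in>support. prob xs * ?i xs)"
    by (simp add: mutual_info_fiber_channel sum_distrib_left) (rule sum.swap)
  have finite_support: "finite support" unfolding support_def using finite_seqs by simp
  have "sum coord_weight support \<le> sum coord_weight seqs"
    using finite_seqs by (intro sum_mono2) (auto simp: support_def coord_weight_nonneg)
  also have "\<dots> \<le> sum prob support"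
    using sum_coord_weight_le_1 sum_prob_mult_support[of "\<lambda>_. 1"] sum_prob by simp
  finally have "0 \<le> (\<Sum>xs\<in>support. prob xs * log 2 (prob xs / coord_weight xs))"
    using finite_support coord_weight_pos by (intro gibbs_inequality) (auto simp: support_def)
  also have "\<dots> = (\<Sum>xs\<in>support. prob xs * - log 2 (cell_prob xs)) - (\<Sum>xs\<in>support. prob xs * ?i xs)"
    by (simp add: log_prob_div_coord_weight right_diff_distrib sum_subtractf)
  finally show ?thesis
    using mi sum_prob_mult_support[of "\<lambda>xs. - log 2 (cell_prob xs)"] by simp
qed

end

context product_source
begin

lemma korner_entropy_sum_le_expected_length:
  fixes adj :: "nat \<Rightarrow> 'x \<Rightarrow> 'x \<Rightarrow> bool" and c :: "'x list \<Rightarrow> bool list"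
  assumes prefix_free: "\<And>xs xs'. xs \<in> seqs \<Longrightarrow> xs' \<in> seqs \<Longrightarrow> prefix (c xs) (c xs') \<Longrightarrow> c xs = c xs'"
    and confusable: "\<And>xs xs' t. xs \<in> seqs \<Longrightarrow> xs' \<in> seqs \<Longrightarrow> c xs = c xs' \<Longrightarrow> t < n \<Longrightarrow>
      \<not> adj t (xs!t) (xs'!t)"
  shows "(\<Sum>t<n. korner_entropy (p t) (adj t)) \<le> (\<Sum>xs\<in>seqs. prob xs * length (c xs))"
proof -
  interpret product_code n p c ..
  have "(\<Sum>t<n. korner_entropy (p t) (adj t)) \<le> (\<Sum>t<n. mutual_info (p t) (fiber_channel t))"
    using vertex_distribution.korner_entropy_le[OF vertex_distribution_p fiber_channel_admissible]
      confusable by (intro sum_mono) auto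
  also have "\<dots> \<le> (\<Sum>xs\<in>seqs. prob xs * - log 2 (cell_prob xs))"
    by (rule sum_mutual_info_fiber_channel_le)
  also have "\<dots> \<le> (\<Sum>xs\<in>seqs. prob xs * length (c xs))"
    unfolding cell_prob_def cell_def using finite_seqs prob_nonneg sum_prob prefix_free
    by (intro entropy_le_expected_length) auto
  finally show ?thesis .
qed

end

section \<open>The converse for the source-coding problem\<close>

lemma prob_n_nonneg: "(\<And>x y. 0 \<le> P x y) \<Longrightarrow> 0 \<le> prob_n P n xs ys"
  unfolding prob_n_def by (intro prod_nonneg) auto

lemma prob_n_pos_nth:
  assumes "\<And>x y. 0 \<le> P x y" "0 < prob_n P n xs ys" "t < n"
  shows "0 < P (xs!t) (ys!t)"
  using assms unfolding prob_n_def
  by (intro prod_pos_imp_factor_pos[where f = "\<lambda>t. P (xs!t) (ys!t)" and A = "{..<n}"]) auto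

lemma sum_prob_n:
  fixes P :: "'x::finite \<Rightarrow> 'y::finite \<Rightarrow> real"
  assumes "(\<Sum>x\<in>UNIV. \<Sum>y\<in>UNIV. P x y) = 1"
  shows "(\<Sum>(xs, ys)\<in>{xs. length xs = n} \<times> {ys. length ys = n}. prob_n P n xs ys) = 1"
  unfolding prob_n_def sum.cartesian_product[symmetric]
  using sum_prod_nth_lists2[of "\<lambda>t x y. P x y" n] assms by simp

lemma pgY_mult_cond_X:
  fixes P :: "'x::finite \<Rightarrow> 'y::finite \<Rightarrow> real"
  shows "0 < pgY P g z \<Longrightarrow> pgY P g z * cond_X P g z x = (\<Sum>y\<in>{y. g y = z}. P x y)"
  unfolding cond_X_def by simp

lemma sum_prob_n_map_eq:
  fixes P :: "'x \<Rightarrow> 'y::finite \<Rightarrow> real" and g :: "'y \<Rightarrow> 'z"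
  assumes "length zs = n"
  shows "(\<Sum>ys\<in>{ys. length ys = n \<and> map g ys = zs}. prob_n P n xs ys)
       = (\<Prod>t<n. \<Sum>y\<in>{y. g y = zs!t}. P (xs!t) y)"
proof -
  have "(\<Sum>ys\<in>{ys. length ys = n \<and> map g ys = zs}. prob_n P n xs ys)
      = (\<Sum>ys\<in>{ys. length ys = n}. \<Prod>t<n. if g (ys!t) = zs!t then P (xs!t) (ys!t) else 0)"
  proof (rule sum.mono_neutral_cong_left)
    show "finite {ys::'y list. length ys = n}" by (rule finite_lists_length_UNIV)
  next
    show "\<forall>ys\<in>{ys. length ys = n} - {ys. length ys = n \<and> map g ys = zs}.
        (\<Prod>t<n. if g (ys!t) = zs!t then P (xs!t) (ys!t) else 0) = 0"
    proof
      fix ys assume "ys \<in> {ys. length ys = n} - {ys. length ys = n \<and> map g ys = zs}"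
      then obtain t where "t < n" "g (ys!t) \<noteq> zs!t"
        using assms by (auto simp: list_eq_iff_nth_eq)
      then show "(\<Prod>t<n. if g (ys!t) = zs!t then P (xs!t) (ys!t) else 0) = 0"
        by (auto intro!: prod_zero bexI[of _ t])
    qed
  next
    fix ys assume "ys \<in> {ys. length ys = n \<and> map g ys = zs}"
    then show "prob_n P n xs ys = (\<Prod>t<n. if g (ys!t) = zs!t then P (xs!t) (ys!t) else 0)"
      unfolding prob_n_def by (auto intro!: prod.cong)
  qed auto
  also have "\<dots> = (\<Prod>t<n. \<Sum>y\<in>{y. g y = zs!t}. P (xs!t) y)"
  proof -
    have fiber: "(\<Sum>y\<in>UNIV. if g y = z then P x y else 0) = (\<Sum>y\<in>{y. g y = z}. P x y)" for x z
      using sum.inter_filter[of UNIV "P x" "\<lambda>y. g y = z"] by simp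
    show ?thesis
      using sum_prod_nth_lists_UNIV[of "\<lambda>t y. if g y = zs!t then P (xs!t) y else 0" n]
      by (simp add: fiber)
  qed
  finally show ?thesis .
qed

context
  fixes P :: "'x::finite \<Rightarrow> 'y::finite \<Rightarrow> real" and g :: "'y \<Rightarrow> 'z::finite"
  assumes nonneg: "\<And>x y. 0 \<le> P x y"
begin

lemma pgY_pos_if_pairwise:
  assumes pairwise: "\<And>z x x'. \<exists>y. g y = z \<and> 0 < P x y * P x' y"
  shows "0 < pgY P g z"
proof -
  obtain y where y: "g y = z" "0 < P undefined y * P undefined y" using pairwise by blast
  then have "0 < P undefined y" using nonneg[of undefined y] by (auto simp: zero_less_mult_iff)
  also have "\<dots> \<le> (\<Sum>y\<in>{y. g y = z}. P undefined y)"
    by (rule member_le_sum) (auto simp: y nonneg)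
  also have "\<dots> \<le> pgY P g z"
    unfolding pgY_def by (rule member_le_sum[of undefined UNIV]) (auto intro: sum_nonneg nonneg)
  finally show ?thesis .
qed

lemma vertex_distribution_cond_X:
  assumes "0 < pgY P g z"
  shows "vertex_distribution (cond_X P g z)"
proof
  show "0 \<le> cond_X P g z x" for x
    unfolding cond_X_def pgY_def by (intro divide_nonneg_nonneg sum_nonneg) (auto intro: nonneg)
  show "(\<Sum>x\<in>UNIV. cond_X P g z x) = 1"
    using assms unfolding cond_X_def by (simp add: sum_divide_distrib[symmetric] pgY_def)
qed

lemma sum_pgY:
  assumes "(\<Sum>x\<in>UNIV. \<Sum>y\<in>UNIV. P x y) = 1"
  shows "(\<Sum>z\<in>UNIV. pgY P g z) = 1"
  unfolding pgY_def using assms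
  by (subst sum.swap) (simp add: sum.group[of UNIV UNIV g, simplified])

end

lemma not_aux_adj_if_same_codeword:
  fixes P :: "'x \<Rightarrow> 'y \<Rightarrow> real"
  assumes nonneg: "\<And>x y. 0 \<le> P x y"
    and pairwise: "\<And>z x x'. \<exists>y. g y = z \<and> 0 < P x y * P x' y"
    and code: "zero_error_code P f g n enc dec"
    and len: "length xs = n" "length xs' = n" "length zs = n"
    and same: "enc xs zs = enc xs' zs" and t: "t < n"
  shows "\<not> aux_adj P f g (zs!t) (xs!t) (xs'!t)"
proof
  assume "aux_adj P f g (zs!t) (xs!t) (xs'!t)"
  then obtain y0 where y0: "g y0 = zs!t" "0 < P (xs!t) y0" "0 < P (xs'!t) y0"
    "f (xs!t) y0 \<noteq> f (xs'!t) y0"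
    unfolding aux_adj_def by blast
  \<comment> \<open>complete y0 to a side-information sequence with side information zs that
    is jointly plausible with both xs and xs'\<close>
  define sel where "sel s = (SOME y. g y = zs!s \<and> 0 < P (xs!s) y * P (xs'!s) y)" for s
  have sel: "g (sel s) = zs!s \<and> 0 < P (xs!s) (sel s) * P (xs'!s) (sel s)" for s
    unfolding sel_def by (rule someI_ex) (rule pairwise)
  define ys where "ys = map (\<lambda>s. if s = t then y0 else sel s) [0..<n]"
  have len_ys: "length ys = n" unfolding ys_def by simp
  have ys_nth: "ys!s = (if s = t then y0 else sel s)" if "s < n" for s
    unfolding ys_def using that by simp
  have map_g_ys: "map g ys = zs"
    by (rule nth_equalityI) (auto simp: len_ys len ys_nth y0 sel)
  have pos: "0 < P (xs!s) (ys!s) \<and> 0 < P (xs'!s) (ys!s)" if "s < n" for s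
    using y0 sel[of s] nonneg[of "xs!s" "sel s"] nonneg[of "xs'!s" "sel s"] ys_nth[OF that]
    by (auto simp: zero_less_mult_iff)
  have "0 < prob_n P n xs ys" "0 < prob_n P n xs' ys"
    unfolding prob_n_def using pos by (auto intro: prod_pos)
  then have "dec ys (enc xs (map g ys)) = map2 f xs ys" "dec ys (enc xs' (map g ys)) = map2 f xs' ys"
    using code len len_ys unfolding zero_error_code_def by blast+
  then have "map2 f xs ys ! t = map2 f xs' ys ! t" using same map_g_ys by simp
  then show False using y0 ys_nth[OF t] t len len_ys by simp
qed

lemma code_rate_by_side_information:
  fixes P :: "'x::finite \<Rightarrow> 'y::finite \<Rightarrow> real" and g :: "'y \<Rightarrow> 'z::finite"
    and enc :: "'x list \<Rightarrow> 'z list \<Rightarrow> bool list"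
  assumes pgY_pos: "\<And>z. 0 < pgY P g z" and n: "0 < n"
  shows "real n * code_rate P g n enc = (\<Sum>zs\<in>{zs. length zs = n}. (\<Prod>t<n. pgY P g (zs!t)) *
    (\<Sum>xs\<in>{xs. length xs = n}. (\<Prod>t<n. cond_X P g (zs!t) (xs!t)) * length (enc xs zs)))"
proof -
  let ?len = "\<lambda>xs zs. real (length (enc xs zs))"
  have fiber: "(\<Sum>ys\<in>{ys. length ys = n \<and> map g ys = zs}. prob_n P n xs ys)
      = (\<Prod>t<n. pgY P g (zs!t)) * (\<Prod>t<n. cond_X P g (zs!t) (xs!t))" if "length zs = n" for xs zs
    by (simp add: sum_prob_n_map_eq[OF that] pgY_mult_cond_X[OF pgY_pos] prod.distrib[symmetric])
  have "real n * code_rate P g n enc = (\<Sum>xs\<in>{xs. length xs = n}. \<Sum>ys\<in>{ys. length ys = n}.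
      prob_n P n xs ys * ?len xs (map g ys))"
    using n by (simp add: code_rate_def sum.cartesian_product)
  also have "\<dots> = (\<Sum>xs\<in>{xs. length xs = n}. \<Sum>zs\<in>{zs. length zs = n}.
      \<Sum>ys\<in>{ys. length ys = n \<and> map g ys = zs}. prob_n P n xs ys * ?len xs zs)"
  proof (intro sum.cong refl)
    fix xs :: "'x list"
    have "(\<Sum>zs\<in>{zs. length zs = n}. \<Sum>ys\<in>{ys. ys \<in> {ys. length ys = n} \<and> map g ys = zs}.
          prob_n P n xs ys * ?len xs (map g ys))
        = (\<Sum>ys\<in>{ys. length ys = n}. prob_n P n xs ys * ?len xs (map g ys))"
      by (rule sum.group) (auto intro: finite_lists_length_UNIV)
    then show "(\<Sum>ys\<in>{ys. length ys = n}. prob_n P n xs ys * ?len xs (map g ys))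
        = (\<Sum>zs\<in>{zs. length zs = n}. \<Sum>ys\<in>{ys. length ys = n \<and> map g ys = zs}. prob_n P n xs ys * ?len xs zs)"
      by (auto intro!: sum.cong)
  qed
  also have "\<dots> = (\<Sum>xs\<in>{xs. length xs = n}. \<Sum>zs\<in>{zs. length zs = n}.
      (\<Prod>t<n. pgY P g (zs!t)) * (\<Prod>t<n. cond_X P g (zs!t) (xs!t)) * ?len xs zs)"
    by (intro sum.cong refl) (simp add: sum_distrib_right[symmetric] fiber)
  also have "\<dots> = (\<Sum>zs\<in>{zs. length zs = n}. (\<Prod>t<n. pgY P g (zs!t)) *
      (\<Sum>xs\<in>{xs. length xs = n}. (\<Prod>t<n. cond_X P g (zs!t) (xs!t)) * ?len xs zs))"
    by (subst sum.swap) (simp add: sum_distrib_left mult.assoc)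
  finally show ?thesis .
qed

lemma korner_sum_le_code_rate:
  fixes P :: "'x::finite \<Rightarrow> 'y::finite \<Rightarrow> real" and g :: "'y \<Rightarrow> 'z::finite"
  assumes nonneg: "\<And>x y. 0 \<le> P x y"
    and sum1: "(\<Sum>x\<in>UNIV. \<Sum>y\<in>UNIV. P x y) = 1"
    and pairwise: "\<And>z x x'. \<exists>y. g y = z \<and> 0 < P x y * P x' y"
    and n: "1 \<le> n" and code: "zero_error_code P f g n enc dec"
  shows "(\<Sum>z\<in>UNIV. pgY P g z * korner_entropy (cond_X P g z) (aux_adj P f g z)) \<le> code_rate P g n enc"
proof -
  define K where "K z = korner_entropy (cond_X P g z) (aux_adj P f g z)" for z
  have pgY_pos: "0 < pgY P g z" for z by (rule pgY_pos_if_pairwise[OF nonneg pairwise])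
  have per_side_information: "(\<Sum>t<n. K (zs!t))
      \<le> (\<Sum>xs\<in>{xs. length xs = n}. (\<Prod>t<n. cond_X P g (zs!t) (xs!t)) * length (enc xs zs))"
    if zs: "length zs = n" for zs
  proof -
    interpret product_source n "\<lambda>t. cond_X P g (zs!t)"
      using vertex_distribution_cond_X[OF nonneg pgY_pos]
      by unfold_locales (auto simp: vertex_distribution_def)
    have "(\<Sum>t<n. korner_entropy (cond_X P g (zs!t)) (aux_adj P f g (zs!t)))
        \<le> (\<Sum>xs\<in>seqs. prob xs * length (enc xs zs))"
    proof (rule korner_entropy_sum_le_expected_length)
      show "enc xs zs = enc xs' zs" if "xs \<in> seqs" "xs' \<in> seqs" "prefix (enc xs zs) (enc xs' zs)" for xs xs'
        using code zs that unfolding zero_error_code_def seqs_def by blast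
      show "\<not> aux_adj P f g (zs!t) (xs!t) (xs'!t)"
        if "xs \<in> seqs" "xs' \<in> seqs" "enc xs zs = enc xs' zs" "t < n" for xs xs' t
        using not_aux_adj_if_same_codeword[OF nonneg pairwise code _ _ zs] that
        unfolding seqs_def by blast
    qed
    then show ?thesis unfolding K_def seqs_def prob_def .
  qed
  have "real n * (\<Sum>z\<in>UNIV. pgY P g z * K z)
      = (\<Sum>zs\<in>{zs. length zs = n}. (\<Prod>t<n. pgY P g (zs!t)) * (\<Sum>t<n. K (zs!t)))"
    by (rule sum_prod_nth_sum[OF sum_pgY[OF nonneg sum1], symmetric])
  also have "\<dots> \<le> (\<Sum>zs\<in>{zs. length zs = n}. (\<Prod>t<n. pgY P g (zs!t)) *
      (\<Sum>xs\<in>{xs. length xs = n}. (\<Prod>t<n. cond_X P g (zs!t) (xs!t)) * length (enc xs zs)))"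
    using pgY_pos by (intro sum_mono mult_left_mono per_side_information prod_nonneg) (auto intro: less_imp_le)
  also have "\<dots> = real n * code_rate P g n enc"
    using n by (intro code_rate_by_side_information[symmetric] pgY_pos) auto
  finally show ?thesis using n unfolding K_def by simp
qed

definition prefix_free_encoder :: "nat \<Rightarrow> ('x list \<Rightarrow> 'z list \<Rightarrow> bool list) \<Rightarrow> bool" where
  "prefix_free_encoder n enc \<longleftrightarrow>
     (\<forall>xs zs xs' zs'. length xs = n \<and> length zs = n \<and> length xs' = n \<and> length zs' = n \<longrightarrow>
        prefix (enc xs zs) (enc xs' zs') \<longrightarrow> enc xs zs = enc xs' zs')"

definition decodable_encoder ::
  "('x \<Rightarrow> 'y \<Rightarrow> real) \<Rightarrow> ('x \<Rightarrow> 'y \<Rightarrow> 'u) \<Rightarrow> ('y \<Rightarrow> 'z) \<Rightarrow> nat \<Rightarrow> ('x list \<Rightarrow> 'z list \<Rightarrow> bool list) \<Rightarrow> bool"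
where
  "decodable_encoder P f g n enc \<longleftrightarrow>
     (\<forall>xs xs' ys. length xs = n \<and> length xs' = n \<and> length ys = n \<and>
        0 < prob_n P n xs ys \<and> 0 < prob_n P n xs' ys \<and> enc xs (map g ys) = enc xs' (map g ys) \<longrightarrow>
        map2 f xs ys = map2 f xs' ys)"

lemma zero_error_code_if_decodable:
  assumes "prefix_free_encoder n enc" "decodable_encoder P f g n enc"
  shows "\<exists>dec. zero_error_code P f g n enc dec"
proof -
  define dec where
    "dec ys w = map2 f (SOME xs'. length xs' = n \<and> 0 < prob_n P n xs' ys \<and> enc xs' (map g ys) = w) ys"
    for ys w
  have "zero_error_code P f g n enc dec"
    unfolding zero_error_code_def
  proof (intro conjI allI impI)
    fix xs zs xs' zs'
    assume "length xs = n \<and> length zs = n \<and> length xs' = n \<and> length zs' = n"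
      "prefix (enc xs zs) (enc xs' zs')"
    then show "enc xs zs = enc xs' zs'" using assms(1) unfolding prefix_free_encoder_def by blast
  next
    fix xs ys assume xs: "length xs = n \<and> length ys = n \<and> 0 < prob_n P n xs ys"
    define xs' where
      "xs' = (SOME xs'. length xs' = n \<and> 0 < prob_n P n xs' ys \<and> enc xs' (map g ys) = enc xs (map g ys))"
    have "length xs' = n \<and> 0 < prob_n P n xs' ys \<and> enc xs' (map g ys) = enc xs (map g ys)"
      unfolding xs'_def by (rule someI[of _ xs]) (use xs in auto)
    then have "map2 f xs' ys = map2 f xs ys"
      using assms(2) xs unfolding decodable_encoder_def by blast
    then show "dec ys (enc xs (map g ys)) = map2 f xs ys" unfolding dec_def xs'_def by simp
  qed
  then show ?thesis by blast
qed

definition pad_encoder :: "nat \<Rightarrow> ('x list \<Rightarrow> 'z list \<Rightarrow> bool list) \<Rightarrow> 'x list \<Rightarrow> 'z list \<Rightarrow> bool list" where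
  "pad_encoder k enc xs zs = enc xs zs @ replicate k False"

lemma prefix_free_pad_encoder:
  assumes "prefix_free_encoder n enc"
  shows "prefix_free_encoder n (pad_encoder k enc)"
  unfolding prefix_free_encoder_def
proof (intro allI impI)
  fix xs zs xs' zs'
  assume len: "length xs = n \<and> length zs = n \<and> length xs' = n \<and> length zs' = n"
    and pre: "prefix (pad_encoder k enc xs zs) (pad_encoder k enc xs' zs')"
  have "length (enc xs zs) \<le> length (enc xs' zs')"
    using prefix_length_le[OF pre] by (simp add: pad_encoder_def)
  moreover have "prefix (enc xs zs) (enc xs' zs' @ replicate k False)"
    using pre unfolding pad_encoder_def by (meson prefix_order.dual_order.trans prefixI)
  ultimately have "prefix (enc xs zs) (enc xs' zs')"
    by (metis prefix_append prefix_length_prefix prefix_order.refl)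
  then show "pad_encoder k enc xs zs = pad_encoder k enc xs' zs'"
    using assms len unfolding prefix_free_encoder_def pad_encoder_def by simp
qed

lemma decodable_pad_encoder:
  "decodable_encoder P f g n enc \<Longrightarrow> decodable_encoder P f g n (pad_encoder k enc)"
  unfolding decodable_encoder_def pad_encoder_def by simp

lemma code_rate_pad_encoder:
  fixes P :: "'x::finite \<Rightarrow> 'y::finite \<Rightarrow> real"
  assumes sum1: "(\<Sum>x\<in>UNIV. \<Sum>y\<in>UNIV. P x y) = 1" and n: "0 < n"
  shows "code_rate P g n (pad_encoder k enc) = code_rate P g n enc + real k / real n"
proof -
  have "(\<Sum>(xs, ys)\<in>{xs. length xs = n} \<times> {ys. length ys = n}.
        prob_n P n xs ys * real (length (pad_encoder k enc xs (map g ys))))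
    = (\<Sum>(xs, ys)\<in>{xs. length xs = n} \<times> {ys. length ys = n}.
        prob_n P n xs ys * real (length (enc xs (map g ys))))
      + real k * (\<Sum>(xs, ys)\<in>{xs. length xs = n} \<times> {ys. length ys = n}. prob_n P n xs ys)"
    unfolding pad_encoder_def sum_distrib_left sum.distrib[symmetric]
    by (intro sum.cong refl) (auto simp: algebra_simps)
  then show ?thesis
    unfolding code_rate_def sum_prob_n[OF sum1] using n by (simp add: field_simps)
qed

text \<open>Achievability asks for rates converging to R itself; padding with zeros
  lifts rates that eventually lie below R to within 1/n of R.\<close>

lemma code_rate_pad_encoder_bounds:
  fixes P :: "'x::finite \<Rightarrow> 'y::finite \<Rightarrow> real"
  assumes sum1: "(\<Sum>x\<in>UNIV. \<Sum>y\<in>UNIV. P x y) = 1"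
    and n: "0 < n" and below: "code_rate P g n enc \<le> R"
  defines "k \<equiv> nat \<lfloor>(R - code_rate P g n enc) * real n\<rfloor>"
  shows "R - 1 / real n \<le> code_rate P g n (pad_encoder k enc)"
    and "code_rate P g n (pad_encoder k enc) \<le> R"
proof -
  define gap where "gap = (R - code_rate P g n enc) * real n"
  have "0 \<le> gap" unfolding gap_def using below by simp
  then have "real k \<le> gap" "gap - 1 < real k"
    unfolding k_def gap_def[symmetric] by linarith+
  then have "real k / real n \<le> gap / real n" "(gap - 1) / real n \<le> real k / real n"
    using n by (auto intro: divide_right_mono)
  moreover have "gap / real n = R - code_rate P g n enc"
    using n unfolding gap_def by simp
  moreover have "(gap - 1) / real n = gap / real n - 1 / real n"
    by (simp add: diff_divide_distrib)
  moreover have "code_rate P g n (pad_encoder k enc) = code_rate P g n enc + real k / real n"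
    using n by (intro code_rate_pad_encoder[OF sum1]) auto
  ultimately show "R - 1 / real n \<le> code_rate P g n (pad_encoder k enc)"
    and "code_rate P g n (pad_encoder k enc) \<le> R"
    by linarith+
qed

lemma achievable_if_rates_bounded:
  fixes P :: "'x::finite \<Rightarrow> 'y::finite \<Rightarrow> real" and g :: "'y \<Rightarrow> 'z"
    and enc :: "nat \<Rightarrow> 'x list \<Rightarrow> 'z list \<Rightarrow> bool list"
  assumes sum1: "(\<Sum>x\<in>UNIV. \<Sum>y\<in>UNIV. P x y) = 1"
    and codes: "\<And>n. 1 \<le> n \<Longrightarrow> prefix_free_encoder n (enc n) \<and> decodable_encoder P f g n (enc n)
      \<and> code_rate P g n (enc n) \<le> u n"
    and lim: "u \<longlonglongrightarrow> u0" and less: "u0 < R"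
  shows "achievable P f g R"
proof -
  define enc' where
    "enc' n = pad_encoder (nat \<lfloor>(R - code_rate P g n (enc n)) * real n\<rfloor>) (enc n)" for n
  have ex: "\<exists>dec. zero_error_code P f g n (enc' n) dec" if "1 \<le> n" for n
    unfolding enc'_def using codes[OF that]
    by (intro zero_error_code_if_decodable prefix_free_pad_encoder decodable_pad_encoder) auto
  define dec where "dec n = (SOME dec. zero_error_code P f g n (enc' n) dec)" for n
  have zero_error: "\<forall>n\<ge>1. zero_error_code P f g n (enc' n) (dec n)"
    unfolding dec_def using someI_ex[OF ex] by blast
  have bounds: "eventually (\<lambda>n. R - 1 / real n \<le> code_rate P g n (enc' n) \<and> code_rate P g n (enc' n) \<le> R)
      sequentially"
    using order_tendstoD(2)[OF lim less] eventually_ge_at_top[of 1]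
  proof eventually_elim
    case (elim n)
    then have "0 < n" "code_rate P g n (enc n) \<le> R" using codes[of n] by auto
    then show ?case unfolding enc'_def using code_rate_pad_encoder_bounds[OF sum1] by blast
  qed
  have lower_lim: "(\<lambda>n. R - 1 / real n) \<longlonglongrightarrow> R"
    using tendsto_diff[OF tendsto_const[of R] lim_inverse_n] by (simp add: inverse_eq_divide)
  have "(\<lambda>n. code_rate P g n (enc' n)) \<longlonglongrightarrow> R"
    by (rule tendsto_sandwich[OF _ _ lower_lim tendsto_const]) (use bounds in \<open>auto elim: eventually_mono\<close>)
  then show ?thesis unfolding achievable_def using zero_error by blast
qed

definition fixed_length_code :: "'a set \<Rightarrow> nat \<Rightarrow> 'a \<Rightarrow> bool list" where
  "fixed_length_code A L = (SOME e. inj_on e A \<and> e ` A \<subseteq> {bs. length bs = L})"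

lemma fixed_length_code:
  assumes "finite A" "card A \<le> 2 ^ L"
  shows "inj_on (fixed_length_code A L) A" and "a \<in> A \<Longrightarrow> length (fixed_length_code A L a) = L"
proof -
  have "card {bs :: bool list. length bs = L} = 2 ^ L"
    using card_lists_length_eq[of "UNIV :: bool set" L] by simp
  then have "\<exists>e. inj_on e A \<and> e ` A \<subseteq> {bs :: bool list. length bs = L}"
    using card_le_inj[of A "{bs :: bool list. length bs = L}"] assms
      finite_lists_length_UNIV[where 'a = bool] by auto
  then have "inj_on (fixed_length_code A L) A \<and> fixed_length_code A L ` A \<subseteq> {bs. length bs = L}"
    unfolding fixed_length_code_def by (rule someI_ex)
  then show "inj_on (fixed_length_code A L) A" and "a \<in> A \<Longrightarrow> length (fixed_length_code A L a) = L"
    by auto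
qed

lemma prefix_free_encoder_if_head_determines_length:
  assumes nonempty: "\<And>xs zs. length xs = n \<Longrightarrow> length zs = n \<Longrightarrow> enc xs zs \<noteq> []"
    and head: "\<And>xs zs xs' zs'. length xs = n \<Longrightarrow> length zs = n \<Longrightarrow> length xs' = n \<Longrightarrow> length zs' = n \<Longrightarrow>
      hd (enc xs zs) = hd (enc xs' zs') \<Longrightarrow> length (enc xs zs) = length (enc xs' zs')"
  shows "prefix_free_encoder n enc"
  unfolding prefix_free_encoder_def
proof (intro allI impI)
  fix xs zs xs' zs'
  assume len: "length xs = n \<and> length zs = n \<and> length xs' = n \<and> length zs' = n"
    and pre: "prefix (enc xs zs) (enc xs' zs')"
  have "hd (enc xs zs) = hd (enc xs' zs')" using pre nonempty len by (auto simp: prefix_def)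
  then have "length (enc xs zs) = length (enc xs' zs')" using head len by blast
  then show "enc xs zs = enc xs' zs'" using pre by (auto simp: prefix_def)
qed

lemma code_rate_le_if_length_le:
  fixes P :: "'x::finite \<Rightarrow> 'y::finite \<Rightarrow> real" and a b \<eta> :: real
  assumes nonneg: "\<And>x y. 0 \<le> P x y" and sum1: "(\<Sum>x\<in>UNIV. \<Sum>y\<in>UNIV. P x y) = 1"
    and n: "0 < n" and b: "0 \<le> b"
    and len: "\<And>xs ys. length xs = n \<Longrightarrow> length ys = n \<Longrightarrow>
      length (enc xs (map g ys)) \<le> a + b * (if bad xs ys then 1 else 0)"
    and bad: "(\<Sum>xs\<in>{xs. length xs = n}. \<Sum>ys\<in>{ys. length ys = n}.
      if bad xs ys then prob_n P n xs ys else 0) \<le> \<eta>"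
  shows "code_rate P g n enc \<le> (a + b * \<eta>) / real n"
proof -
  let ?E = "\<lambda>F. \<Sum>xs\<in>{xs. length xs = n}. \<Sum>ys\<in>{ys. length ys = n}. F xs ys"
  have "real n * code_rate P g n enc = ?E (\<lambda>xs ys. prob_n P n xs ys * length (enc xs (map g ys)))"
    using n by (simp add: code_rate_def sum.cartesian_product)
  also have "\<dots> \<le> ?E (\<lambda>xs ys. prob_n P n xs ys * (a + b * (if bad xs ys then 1 else 0)))"
    by (intro sum_mono mult_left_mono prob_n_nonneg[of P, OF nonneg] len) auto
  also have "\<dots> = a * ?E (prob_n P n) + b * ?E (\<lambda>xs ys. if bad xs ys then prob_n P n xs ys else 0)"
    unfolding sum_distrib_left sum.distrib[symmetric] by (intro sum.cong refl) (simp add: algebra_simps)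
  also have "\<dots> \<le> a + b * \<eta>"
    using sum_prob_n[OF sum1, of n] bad b by (simp add: sum.cartesian_product mult_left_mono)
  finally show ?thesis using n by (simp add: field_simps)
qed

lemma log_linear_over_n_tendsto_0:
  fixes a :: real
  assumes a: "0 \<le> a"
  shows "(\<lambda>n. log 2 (real n * a + 1) / real n) \<longlonglongrightarrow> 0"
proof (rule tendsto_sandwich[OF _ _ tendsto_const])
  have "(\<lambda>n. ln (real n) / real n) \<longlonglongrightarrow> 0"
    by (rule filterlim_compose[OF ln_x_over_x_tendsto_0 filterlim_real_sequentially])
  then have "(\<lambda>n. log 2 (a + 1) * inverse (real n) + ln (real n) / real n / ln 2)
      \<longlonglongrightarrow> log 2 (a + 1) * 0 + 0 / ln 2"
    by (intro tendsto_add tendsto_mult tendsto_divide tendsto_const lim_inverse_n) auto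
  then show "(\<lambda>n. log 2 (a + 1) * inverse (real n) + ln (real n) / real n / ln 2) \<longlonglongrightarrow> 0"
    by simp
  show "\<forall>\<^sub>F n in sequentially. 0 \<le> log 2 (real n * a + 1) / real n"
  proof (intro always_eventually allI divide_nonneg_nonneg)
    fix n :: nat
    have "0 < real n * a + 1" using a by (intro add_nonneg_pos) auto
    then show "0 \<le> log 2 (real n * a + 1)" using a by simp
  qed simp
  show "\<forall>\<^sub>F n in sequentially. log 2 (real n * a + 1) / real n
      \<le> log 2 (a + 1) * inverse (real n) + ln (real n) / real n / ln 2"
    using eventually_ge_at_top[of 1]
  proof eventually_elim
    case (elim n)
    then have n: "1 \<le> real n" by simp
    have "0 < real n * a + 1" using a by (intro add_nonneg_pos) auto
    then have "log 2 (real n * a + 1) \<le> log 2 (real n * (a + 1))"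
      using a n by (intro log_mono) (auto simp: algebra_simps)
    also have "\<dots> = log 2 (a + 1) + ln (real n) / ln 2"
      using a n by (simp add: log_mult_pos log_def ln_mult add_divide_distrib)
    finally have "log 2 (real n * a + 1) / real n \<le> (log 2 (a + 1) + ln (real n) / ln 2) / real n"
      using n by (intro divide_right_mono) auto
    then show ?case by (simp add: add_divide_distrib divide_inverse ac_simps distrib_left)
  qed
qed

section \<open>Random coding and concentration\<close>

lemma sum_prob_n_correlation:
  fixes P :: "'x::finite \<Rightarrow> 'y::finite \<Rightarrow> real" and \<psi> :: "'x \<Rightarrow> 'y \<Rightarrow> real"
  assumes sum1: "(\<Sum>x\<in>UNIV. \<Sum>y\<in>UNIV. P x y) = 1"
    and mean_zero: "(\<Sum>x\<in>UNIV. \<Sum>y\<in>UNIV. P x y * \<psi> x y) = 0"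
    and t: "t < n" and s: "s < n"
  shows "(\<Sum>xs\<in>{xs. length xs = n}. \<Sum>ys\<in>{ys. length ys = n}.
      prob_n P n xs ys * \<psi> (xs!t) (ys!t) * \<psi> (xs!s) (ys!s))
    = (if t = s then \<Sum>x\<in>UNIV. \<Sum>y\<in>UNIV. P x y * (\<psi> x y)\<^sup>2 else 0)"
proof -
  define F where "F u x y = P x y * (if u = t then \<psi> x y else 1) * (if u = s then \<psi> x y else 1)"
    for u x y
  have "prob_n P n xs ys * \<psi> (xs!t) (ys!t) * \<psi> (xs!s) (ys!s) = (\<Prod>u<n. F u (xs!u) (ys!u))" for xs ys
    using t s by (simp add: F_def prod.distrib prob_n_def)
  then have "(\<Sum>xs\<in>{xs. length xs = n}. \<Sum>ys\<in>{ys. length ys = n}.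
      prob_n P n xs ys * \<psi> (xs!t) (ys!t) * \<psi> (xs!s) (ys!s)) = (\<Prod>u<n. \<Sum>x\<in>UNIV. \<Sum>y\<in>UNIV. F u x y)"
    by (simp add: sum_prod_nth_lists2)
  also have "\<dots> = (if t = s then \<Sum>x\<in>UNIV. \<Sum>y\<in>UNIV. P x y * (\<psi> x y)\<^sup>2 else 0)"
  proof (cases "t = s")
    case True
    then have "(\<Prod>u<n. \<Sum>x\<in>UNIV. \<Sum>y\<in>UNIV. F u x y)
        = (\<Prod>u<n. if u = t then \<Sum>x\<in>UNIV. \<Sum>y\<in>UNIV. P x y * (\<psi> x y)\<^sup>2 else 1)"
      by (intro prod.cong) (auto simp: F_def power2_eq_square sum1 mult.assoc)
    then show ?thesis using True t by simp
  next
    case False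
    then have "(\<Sum>x\<in>UNIV. \<Sum>y\<in>UNIV. F t x y) = 0" using mean_zero by (simp add: F_def)
    then have "(\<Prod>u<n. \<Sum>x\<in>UNIV. \<Sum>y\<in>UNIV. F u x y) = 0" using t by (intro prod_zero) auto
    then show ?thesis using False by simp
  qed
  finally show ?thesis .
qed

lemma sum_prob_n_square_sum:
  fixes P :: "'x::finite \<Rightarrow> 'y::finite \<Rightarrow> real" and \<psi> :: "'x \<Rightarrow> 'y \<Rightarrow> real"
  assumes sum1: "(\<Sum>x\<in>UNIV. \<Sum>y\<in>UNIV. P x y) = 1"
    and mean_zero: "(\<Sum>x\<in>UNIV. \<Sum>y\<in>UNIV. P x y * \<psi> x y) = 0"
  shows "(\<Sum>xs\<in>{xs. length xs = n}. \<Sum>ys\<in>{ys. length ys = n}.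
      prob_n P n xs ys * (\<Sum>t<n. \<psi> (xs!t) (ys!t))\<^sup>2) = real n * (\<Sum>x\<in>UNIV. \<Sum>y\<in>UNIV. P x y * (\<psi> x y)\<^sup>2)"
proof -
  let ?E = "\<lambda>F. \<Sum>xs\<in>{xs. length xs = n}. \<Sum>ys\<in>{ys. length ys = n}. F xs ys"
  have "?E (\<lambda>xs ys. prob_n P n xs ys * (\<Sum>t<n. \<psi> (xs!t) (ys!t))\<^sup>2)
      = ?E (\<lambda>xs ys. \<Sum>t<n. \<Sum>s<n. prob_n P n xs ys * \<psi> (xs!t) (ys!t) * \<psi> (xs!s) (ys!s))"
  proof (intro sum.cong refl)
    fix xs ys :: "_ list"
    have "(\<Sum>t<n. \<psi> (xs!t) (ys!t))\<^sup>2 = (\<Sum>t<n. \<Sum>s<n. \<psi> (xs!t) (ys!t) * \<psi> (xs!s) (ys!s))"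
      unfolding power2_eq_square sum_product ..
    then show "prob_n P n xs ys * (\<Sum>t<n. \<psi> (xs!t) (ys!t))\<^sup>2
        = (\<Sum>t<n. \<Sum>s<n. prob_n P n xs ys * \<psi> (xs!t) (ys!t) * \<psi> (xs!s) (ys!s))"
      by (simp add: sum_distrib_left mult.assoc)
  qed
  also have "\<dots> = (\<Sum>t<n. \<Sum>s<n. ?E (\<lambda>xs ys. prob_n P n xs ys * \<psi> (xs!t) (ys!t) * \<psi> (xs!s) (ys!s)))"
    by (rule sum_swap_pairs)
  also have "\<dots> = real n * (\<Sum>x\<in>UNIV. \<Sum>y\<in>UNIV. P x y * (\<psi> x y)\<^sup>2)"
    by (simp add: sum_prob_n_correlation[OF sum1 mean_zero])
  finally show ?thesis .
qed

lemma prob_n_large_deviation_le: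
  fixes P :: "'x::finite \<Rightarrow> 'y::finite \<Rightarrow> real" and \<psi> :: "'x \<Rightarrow> 'y \<Rightarrow> real"
  assumes nonneg: "\<And>x y. 0 \<le> P x y" and sum1: "(\<Sum>x\<in>UNIV. \<Sum>y\<in>UNIV. P x y) = 1"
    and mean_zero: "(\<Sum>x\<in>UNIV. \<Sum>y\<in>UNIV. P x y * \<psi> x y) = 0"
    and n: "0 < n" and e: "0 < e"
  shows "(\<Sum>xs\<in>{xs. length xs = n}. \<Sum>ys\<in>{ys. length ys = n}.
      if real n * e < (\<Sum>t<n. \<psi> (xs!t) (ys!t)) then prob_n P n xs ys else 0)
    \<le> (\<Sum>x\<in>UNIV. \<Sum>y\<in>UNIV. P x y * (\<psi> x y)\<^sup>2) / (real n * e\<^sup>2)"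
proof -
  define c where "c = (real n * e)\<^sup>2"
  have c: "0 < c" unfolding c_def using n e by simp
  have "(if real n * e < (\<Sum>t<n. \<psi> (xs!t) (ys!t)) then prob_n P n xs ys else 0)
      \<le> prob_n P n xs ys * (\<Sum>t<n. \<psi> (xs!t) (ys!t))\<^sup>2 / c" for xs ys
  proof (cases "real n * e < (\<Sum>t<n. \<psi> (xs!t) (ys!t))")
    case True
    then have "c \<le> (\<Sum>t<n. \<psi> (xs!t) (ys!t))\<^sup>2"
      unfolding c_def using n e by (intro power_mono) auto
    then have "prob_n P n xs ys * 1 \<le> prob_n P n xs ys * ((\<Sum>t<n. \<psi> (xs!t) (ys!t))\<^sup>2 / c)"
      using c prob_n_nonneg[of P, OF nonneg] by (intro mult_left_mono) auto
    then show ?thesis using True by simp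
  qed (use c prob_n_nonneg[of P, OF nonneg] in simp)
  then have "(\<Sum>xs\<in>{xs. length xs = n}. \<Sum>ys\<in>{ys. length ys = n}.
        if real n * e < (\<Sum>t<n. \<psi> (xs!t) (ys!t)) then prob_n P n xs ys else 0)
      \<le> (\<Sum>xs\<in>{xs. length xs = n}. \<Sum>ys\<in>{ys. length ys = n}.
        prob_n P n xs ys * (\<Sum>t<n. \<psi> (xs!t) (ys!t))\<^sup>2) / c"
    unfolding sum_divide_distrib by (intro sum_mono)
  also have "\<dots> = (\<Sum>x\<in>UNIV. \<Sum>y\<in>UNIV. P x y * (\<psi> x y)\<^sup>2) / (real n * e\<^sup>2)"
    unfolding sum_prob_n_square_sum[OF sum1 mean_zero] c_def using n by (simp add: power2_eq_square)
  finally show ?thesis .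
qed

lemma ex_pos_weight_less_1:
  fixes w U :: "'a \<Rightarrow> real"
  assumes w_nonneg: "\<And>c. c \<in> C \<Longrightarrow> 0 \<le> w c" and w_sum: "sum w C = 1"
    and mean: "(\<Sum>c\<in>C. w c * U c) < 1"
  shows "\<exists>c\<in>C. 0 < w c \<and> U c < 1"
proof (rule ccontr)
  assume contra: "\<not> (\<exists>c\<in>C. 0 < w c \<and> U c < 1)"
  have "w c \<le> w c * U c" if "c \<in> C" for c
  proof (cases "w c = 0")
    case False
    then have "0 < w c" using w_nonneg[OF that] by simp
    then show ?thesis using contra that mult_left_mono[of 1 "U c" "w c"] by fastforce
  qed simp
  then have "sum w C \<le> (\<Sum>c\<in>C. w c * U c)" by (rule sum_mono)
  then show False using w_sum mean by simp
qed

lemma sum_prod_nth_if_covered: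
  fixes q :: "nat \<Rightarrow> 'x::finite set \<Rightarrow> real"
  shows "(\<Sum>Ws\<in>{Ws. length Ws = n}. if \<forall>t<n. xs!t \<in> Ws!t then \<Prod>t<n. q t (Ws!t) else 0)
    = (\<Prod>t<n. \<Sum>W\<in>{W. xs!t \<in> W}. q t W)"
proof -
  have "(if \<forall>t<n. xs!t \<in> Ws!t then \<Prod>t<n. q t (Ws!t) else 0)
      = (\<Prod>t<n. if xs!t \<in> Ws!t then q t (Ws!t) else 0)" for Ws
    by (auto intro: prod.cong prod_zero)
  moreover have "(\<Sum>W\<in>UNIV. if xs!t \<in> W then q t W else 0) = (\<Sum>W\<in>{W. xs!t \<in> W}. q t W)" for t
    using sum.inter_filter[of UNIV "q t" "\<lambda>W. xs!t \<in> W"] by simp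
  ultimately show ?thesis
    using sum_prod_nth_lists_UNIV[of "\<lambda>t W. if xs!t \<in> W then q t W else 0" n] by simp
qed

text \<open>The probability that N independent random codewords, each drawn from the
  product law of q, all miss xs.\<close>

lemma prob_codebook_misses:
  fixes q :: "nat \<Rightarrow> 'x::finite set \<Rightarrow> real"
  assumes q_sum: "\<And>t. t < n \<Longrightarrow> (\<Sum>W\<in>UNIV. q t W) = 1"
  shows "(\<Sum>cb\<in>{cb. set cb \<subseteq> {Ws. length Ws = n} \<and> length cb = N}.
      if \<forall>j<N. \<not> (\<forall>t<n. xs!t \<in> cb!j!t) then \<Prod>j<N. \<Prod>t<n. q t (cb!j!t) else 0)
    = (1 - (\<Prod>t<n. \<Sum>W\<in>{W. xs!t \<in> W}. q t W)) ^ N"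
proof -
  let ?Cv = "{Ws :: 'x set list. length Ws = n}"
  have "(\<Sum>Ws\<in>?Cv. if \<forall>t<n. xs!t \<in> Ws!t then 0 else \<Prod>t<n. q t (Ws!t))
      = (\<Sum>Ws\<in>?Cv. \<Prod>t<n. q t (Ws!t))
        - (\<Sum>Ws\<in>?Cv. if \<forall>t<n. xs!t \<in> Ws!t then \<Prod>t<n. q t (Ws!t) else 0)"
    unfolding sum_subtractf[symmetric] by (intro sum.cong refl) auto
  also have "\<dots> = 1 - (\<Prod>t<n. \<Sum>W\<in>{W. xs!t \<in> W}. q t W)"
    by (simp add: sum_prod_nth_lists_UNIV q_sum sum_prod_nth_if_covered)
  finally have miss_one: "(\<Sum>Ws\<in>?Cv. if \<forall>t<n. xs!t \<in> Ws!t then 0 else \<Prod>t<n. q t (Ws!t))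
      = 1 - (\<Prod>t<n. \<Sum>W\<in>{W. xs!t \<in> W}. q t W)" .
  have "(if \<forall>j<N. \<not> (\<forall>t<n. xs!t \<in> cb!j!t) then \<Prod>j<N. \<Prod>t<n. q t (cb!j!t) else 0)
      = (\<Prod>j<N. if \<forall>t<n. xs!t \<in> cb!j!t then 0 else \<Prod>t<n. q t (cb!j!t))" for cb :: "'x set list list"
  proof (cases "\<forall>j<N. \<not> (\<forall>t<n. xs!t \<in> cb!j!t)")
    case True
    then have "(\<Prod>j<N. \<Prod>t<n. q t (cb!j!t))
        = (\<Prod>j<N. if \<forall>t<n. xs!t \<in> cb!j!t then 0 else \<Prod>t<n. q t (cb!j!t))"
      by (intro prod.cong) auto
    then show ?thesis by (subst if_P[OF True])
  next
    case False
    then obtain j where "j < N" "\<forall>t<n. xs!t \<in> cb!j!t" by blast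
    then have "(\<Prod>j<N. if \<forall>t<n. xs!t \<in> cb!j!t then 0 else \<Prod>t<n. q t (cb!j!t)) = 0"
      by (intro prod_zero bexI[of _ j]) auto
    then show ?thesis by (subst if_not_P[OF False]) (rule sym)
  qed
  then show ?thesis
    using sum_prod_nth_lists[of ?Cv "\<lambda>j Ws. if \<forall>t<n. xs!t \<in> Ws!t then 0 else \<Prod>t<n. q t (Ws!t)" N]
    by (simp add: finite_lists_length_UNIV miss_one)
qed

lemma prob_codebook_misses_le:
  fixes q :: "nat \<Rightarrow> 'x::finite set \<Rightarrow> real"
  assumes q_nonneg: "\<And>t W. 0 \<le> q t W" and q_sum: "\<And>t. t < n \<Longrightarrow> (\<Sum>W\<in>UNIV. q t W) = 1"
    and covered: "\<theta> \<le> (\<Prod>t<n. \<Sum>W\<in>{W. xs!t \<in> W}. q t W)"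
  shows "(\<Sum>cb\<in>{cb. set cb \<subseteq> {Ws. length Ws = n} \<and> length cb = N}.
      if \<forall>j<N. \<not> (\<forall>t<n. xs!t \<in> cb!j!t) then \<Prod>j<N. \<Prod>t<n. q t (cb!j!t) else 0)
    \<le> exp (- (real N * \<theta>))"
proof -
  let ?pi = "\<Prod>t<n. \<Sum>W\<in>{W. xs!t \<in> W}. q t W"
  have "?pi \<le> 1"
  proof (rule prod_le_1)
    fix t assume t: "t \<in> {..<n}"
    have "(\<Sum>W\<in>{W. xs!t \<in> W}. q t W) \<le> (\<Sum>W\<in>UNIV. q t W)"
      by (rule sum_mono2) (auto intro: q_nonneg)
    then show "0 \<le> (\<Sum>W\<in>{W. xs!t \<in> W}. q t W) \<and> (\<Sum>W\<in>{W. xs!t \<in> W}. q t W) \<le> 1"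
      using q_sum t by (auto intro: sum_nonneg q_nonneg)
  qed
  have "(1 - ?pi) ^ N \<le> exp (- ?pi) ^ N"
    by (intro power_mono) (use \<open>?pi \<le> 1\<close> exp_ge_add_one_self[of "- ?pi"] in auto)
  also have "\<dots> \<le> exp (- (real N * \<theta>))"
    using covered by (simp add: exp_of_nat_mult[symmetric] mult_left_mono)
  finally show ?thesis by (simp only: prob_codebook_misses[OF q_sum])
qed

lemma expected_uncovered_less_1:
  fixes q :: "nat \<Rightarrow> 'x::finite set \<Rightarrow> real" and T :: "'x list set"
  assumes q_nonneg: "\<And>t W. 0 \<le> q t W" and q_sum: "\<And>t. t < n \<Longrightarrow> (\<Sum>W\<in>UNIV. q t W) = 1"
    and finite_T: "finite T"
    and covered: "\<And>xs. xs \<in> T \<Longrightarrow> \<theta> \<le> (\<Prod>t<n. \<Sum>W\<in>{W. xs!t \<in> W}. q t W)"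
    and small: "real (card T) * exp (- (real N * \<theta>)) < 1"
  shows "(\<Sum>cb\<in>{cb. set cb \<subseteq> {Ws. length Ws = n} \<and> length cb = N}. (\<Prod>j<N. \<Prod>t<n. q t (cb!j!t)) *
      card {xs\<in>T. \<forall>j<N. \<not> (\<forall>t<n. xs!t \<in> cb!j!t)}) < 1"
proof -
  let ?CB = "{cb. set cb \<subseteq> {Ws :: 'x set list. length Ws = n} \<and> length cb = N}"
  let ?misses = "\<lambda>cb xs. \<forall>j<N. \<not> (\<forall>t<n. xs!t \<in> cb!j!t)"
  have "(\<Prod>j<N. \<Prod>t<n. q t (cb!j!t)) * card {xs\<in>T. ?misses cb xs}
      = (\<Sum>xs\<in>T. if ?misses cb xs then \<Prod>j<N. \<Prod>t<n. q t (cb!j!t) else 0)" for cb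
    using finite_T by (simp add: sum.inter_filter[symmetric])
  then have "(\<Sum>cb\<in>?CB. (\<Prod>j<N. \<Prod>t<n. q t (cb!j!t)) * card {xs\<in>T. ?misses cb xs})
      = (\<Sum>xs\<in>T. \<Sum>cb\<in>?CB. if ?misses cb xs then \<Prod>j<N. \<Prod>t<n. q t (cb!j!t) else 0)"
    by (simp only: sum.swap[of _ ?CB T])
  also have "\<dots> \<le> (\<Sum>xs\<in>T. exp (- (real N * \<theta>)))"
    by (intro sum_mono prob_codebook_misses_le q_nonneg q_sum covered)
  also have "\<dots> < 1" using small by simp
  finally show ?thesis .
qed

lemma random_covering:
  fixes q :: "nat \<Rightarrow> 'x::finite set \<Rightarrow> real" and T :: "'x list set"
  assumes q_nonneg: "\<And>t W. 0 \<le> q t W" and q_sum: "\<And>t. t < n \<Longrightarrow> (\<Sum>W\<in>UNIV. q t W) = 1"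
    and T: "T \<subseteq> {xs. length xs = n}"
    and covered: "\<And>xs. xs \<in> T \<Longrightarrow> \<theta> \<le> (\<Prod>t<n. \<Sum>W\<in>{W. xs!t \<in> W}. q t W)"
    and small: "real (card T) * exp (- (real N * \<theta>)) < 1"
  shows "\<exists>cb. length cb = N \<and> (\<forall>j<N. length (cb!j) = n \<and> (\<forall>t<n. 0 < q t (cb!j!t)))
    \<and> (\<forall>xs\<in>T. \<exists>j<N. \<forall>t<n. xs!t \<in> cb!j!t)"
proof -
  define CB where "CB = {cb. set cb \<subseteq> {Ws :: 'x set list. length Ws = n} \<and> length cb = N}"
  define weight where "weight cb = (\<Prod>j<N. \<Prod>t<n. q t (cb!j!t))" for cb :: "'x set list list"
  have finite_T: "finite T" using T finite_lists_length_UNIV by (rule finite_subset)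
  have "sum weight CB = (\<Prod>j<N. \<Sum>Ws\<in>{Ws :: 'x set list. length Ws = n}. \<Prod>t<n. q t (Ws!t))"
    unfolding CB_def weight_def by (rule sum_prod_nth_lists[OF finite_lists_length_UNIV])
  then have "sum weight CB = 1" by (simp add: sum_prod_nth_lists_UNIV q_sum)
  moreover have "0 \<le> weight cb" for cb
    unfolding weight_def by (intro prod_nonneg q_nonneg)
  ultimately obtain cb where cb: "cb \<in> CB" "0 < weight cb"
    and "real (card {xs\<in>T. \<forall>j<N. \<not> (\<forall>t<n. xs!t \<in> cb!j!t)}) < 1"
    using ex_pos_weight_less_1[of CB weight "\<lambda>cb. real (card {xs\<in>T. \<forall>j<N. \<not> (\<forall>t<n. xs!t \<in> cb!j!t)})"]
      expected_uncovered_less_1[OF q_nonneg q_sum finite_T covered small]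
    unfolding CB_def weight_def by blast
  then have "{xs\<in>T. \<forall>j<N. \<not> (\<forall>t<n. xs!t \<in> cb!j!t)} = {}" using finite_T by simp
  then have "\<forall>xs\<in>T. \<exists>j<N. \<forall>t<n. xs!t \<in> cb!j!t" by blast
  moreover have "0 < q t (cb!j!t)" if "j < N" "t < n" for j t
  proof -
    have "0 < (\<Prod>t<n. q t (cb!j!t))"
      using cb(2) that q_nonneg unfolding weight_def
      by (intro prod_pos_imp_factor_pos[where f = "\<lambda>j. \<Prod>t<n. q t (cb!j!t)" and A = "{..<N}"])
        (auto intro: prod_nonneg)
    then show ?thesis
      using that q_nonneg by (intro prod_pos_imp_factor_pos[where f = "\<lambda>t. q t (cb!j!t)" and A = "{..<n}"]) auto
  qed
  moreover have "length cb = N" "\<forall>j<N. length (cb!j) = n"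
    using cb(1) unfolding CB_def by (auto dest: nth_mem)
  ultimately show ?thesis by (intro exI[of _ cb]) auto
qed

section \<open>Achievability\<close>

lemma map2_eq_if_covered_by_indep_sets:
  assumes nonneg: "\<And>x y. 0 \<le> P x y"
    and len: "length xs = n" "length xs' = n" "length ys = n"
    and pos: "0 < prob_n P n xs ys" "0 < prob_n P n xs' ys"
    and indep: "\<And>t. t < n \<Longrightarrow> indep_set (aux_adj P f g (g (ys!t))) (Ws!t)"
    and covered: "\<And>t. t < n \<Longrightarrow> xs!t \<in> Ws!t" "\<And>t. t < n \<Longrightarrow> xs'!t \<in> Ws!t"
  shows "map2 f xs ys = map2 f xs' ys"
proof (rule nth_equalityI)
  fix t assume "t < length (map2 f xs ys)"
  then have t: "t < n" using len by simp
  have "\<not> aux_adj P f g (g (ys!t)) (xs!t) (xs'!t)"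
    using indep[OF t] covered[OF t] covered(2)[OF t] unfolding indep_set_def by blast
  then have "f (xs!t) (ys!t) = f (xs'!t) (ys!t)"
    using prob_n_pos_nth[OF nonneg pos(1) t] prob_n_pos_nth[OF nonneg pos(2) t]
    unfolding aux_adj_def by blast
  then show "map2 f xs ys ! t = map2 f xs' ys ! t" using t len by simp
qed (use len in simp)

locale achievability_setting =
  fixes P :: "'x::finite \<Rightarrow> 'y::finite \<Rightarrow> real" and f :: "'x \<Rightarrow> 'y \<Rightarrow> 'u"
    and g :: "'y \<Rightarrow> 'z::finite" and Q :: "'z \<Rightarrow> 'x \<Rightarrow> 'x set \<Rightarrow> real" and \<delta> :: real
  assumes nonneg: "\<And>x y. 0 \<le> P x y"
    and sum1: "(\<Sum>x\<in>UNIV. \<Sum>y\<in>UNIV. P x y) = 1"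
    and pairwise: "\<And>z x x'. \<exists>y. g y = z \<and> 0 < P x y * P x' y"
    and admissible: "\<And>z. admissible_channel (cond_X P g z) (aux_adj P f g z) (Q z)"
    and delta_pos: "0 < \<delta>"
begin

abbreviation cov :: "'z \<Rightarrow> 'x \<Rightarrow> real" where
  "cov z \<equiv> cover_prob (cond_X P g z) (Q z)"

definition info :: "'x \<Rightarrow> 'y \<Rightarrow> real" where
  "info x y = - log 2 (cov (g y) x)"

definition info_mean :: real where
  "info_mean = (\<Sum>x\<in>UNIV. \<Sum>y\<in>UNIV. P x y * info x y)"

definition info_var :: real where
  "info_var = (\<Sum>x\<in>UNIV. \<Sum>y\<in>UNIV. P x y * (info x y - info_mean)\<^sup>2)"

definition typical :: "nat \<Rightarrow> 'z list \<Rightarrow> 'x list set" where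
  "typical n zs = {xs. length xs = n \<and> (\<forall>t<n. 0 < cov (zs!t) (xs!t)) \<and>
     (\<Sum>t<n. - log 2 (cov (zs!t) (xs!t))) \<le> real n * (info_mean + \<delta>)}"

lemma pgY_pos: "0 < pgY P g z"
  by (rule pgY_pos_if_pairwise[OF nonneg pairwise])

lemma cond_X_distribution: "vertex_distribution (cond_X P g z)"
  by (rule vertex_distribution_cond_X[OF nonneg pgY_pos])

lemma cov_pos:
  assumes "0 < P x y"
  shows "0 < cov (g y) x"
proof -
  have "P x y \<le> (\<Sum>y'\<in>{y'. g y' = g y}. P x y')" by (rule member_le_sum) (auto intro: nonneg)
  then have "0 < cond_X P g (g y) x" using assms pgY_pos unfolding cond_X_def by simp
  then show ?thesis by (rule vertex_distribution.cover_prob_pos[OF cond_X_distribution admissible])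
qed

lemma info_nonneg: "0 \<le> info x y"
proof (cases "cov (g y) x = 0")
  case False
  then have "0 < cov (g y) x"
    using vertex_distribution.cover_prob_nonneg[OF cond_X_distribution admissible] less_le by metis
  then show ?thesis
    using vertex_distribution.cover_prob_le_1[OF cond_X_distribution admissible, of "g y" x]
    by (simp add: info_def)
qed (simp add: info_def log_def)

lemma info_mean_le: "info_mean \<le> (\<Sum>z\<in>UNIV. pgY P g z * mutual_info (cond_X P g z) (Q z))"
proof -
  have "info_mean = (\<Sum>x\<in>UNIV. \<Sum>z\<in>UNIV. \<Sum>y\<in>{y. g y = z}. P x y * info x y)"
    unfolding info_mean_def by (intro sum.cong refl) (simp add: sum.group[of UNIV UNIV g, simplified])
  also have "\<dots> = (\<Sum>z\<in>UNIV. \<Sum>x\<in>UNIV. (\<Sum>y\<in>{y. g y = z}. P x y) * - log 2 (cov z x))"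
    unfolding sum_distrib_right by (subst sum.swap) (intro sum.cong refl, simp add: info_def)
  also have "\<dots> = (\<Sum>z\<in>UNIV. pgY P g z * (\<Sum>x\<in>UNIV. cond_X P g z x * - log 2 (cov z x)))"
    by (simp add: pgY_mult_cond_X[OF pgY_pos, symmetric] sum_distrib_left mult.assoc)
  also have "\<dots> \<le> (\<Sum>z\<in>UNIV. pgY P g z * mutual_info (cond_X P g z) (Q z))"
    using vertex_distribution.cover_entropy_le_mutual_info[OF cond_X_distribution admissible] pgY_pos
    by (intro sum_mono mult_left_mono) (auto intro: less_imp_le)
  finally show ?thesis .
qed

lemma atypical_prob_le:
  assumes n: "0 < n"
  shows "(\<Sum>xs\<in>{xs. length xs = n}. \<Sum>ys\<in>{ys. length ys = n}.
      if xs \<notin> typical n (map g ys) then prob_n P n xs ys else 0) \<le> info_var / (real n * \<delta>\<^sup>2)"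
proof -
  let ?\<psi> = "\<lambda>x y. info x y - info_mean"
  have "(if xs \<notin> typical n (map g ys) then prob_n P n xs ys else 0)
      \<le> (if real n * \<delta> < (\<Sum>t<n. ?\<psi> (xs!t) (ys!t)) then prob_n P n xs ys else 0)"
    if "length xs = n" "length ys = n" for xs ys
  proof (cases "0 < prob_n P n xs ys \<and> xs \<notin> typical n (map g ys)")
    case True
    then have "0 < cov (g (ys!t)) (xs!t)" if "t < n" for t
      using cov_pos[OF prob_n_pos_nth[of P, OF nonneg _ that]] True by blast
    then have "real n * (info_mean + \<delta>) < (\<Sum>t<n. info (xs!t) (ys!t))"
      using True that unfolding typical_def info_def by auto
    then show ?thesis using True by (simp add: sum_subtractf algebra_simps)
  qed (auto simp: prob_n_nonneg[of P, OF nonneg] less_le)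
  then have "(\<Sum>xs\<in>{xs. length xs = n}. \<Sum>ys\<in>{ys. length ys = n}.
      if xs \<notin> typical n (map g ys) then prob_n P n xs ys else 0)
    \<le> (\<Sum>xs\<in>{xs. length xs = n}. \<Sum>ys\<in>{ys. length ys = n}.
      if real n * \<delta> < (\<Sum>t<n. ?\<psi> (xs!t) (ys!t)) then prob_n P n xs ys else 0)"
    by (intro sum_mono) auto
  also have "\<dots> \<le> info_var / (real n * \<delta>\<^sup>2)"
    unfolding info_var_def
  proof (rule prob_n_large_deviation_le[OF nonneg sum1 _ n delta_pos])
    show "(\<Sum>x\<in>UNIV. \<Sum>y\<in>UNIV. P x y * (info x y - info_mean)) = 0"
      using sum1 by (simp add: right_diff_distrib sum_subtractf sum_distrib_right[symmetric] info_mean_def)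
  qed
  finally show ?thesis .
qed

definition index_length :: "nat \<Rightarrow> nat" where
  "index_length n = nat \<lceil>real n * (info_mean + \<delta>) + log 2 (real n * card (UNIV :: 'x set) + 1)\<rceil>"

lemma info_mean_nonneg: "0 \<le> info_mean"
  unfolding info_mean_def by (intro sum_nonneg mult_nonneg_nonneg nonneg info_nonneg)

lemma index_length_bounds:
  "real n * (info_mean + \<delta>) + log 2 (real n * card (UNIV :: 'x set) + 1) \<le> index_length n"
  "index_length n \<le> real n * (info_mean + \<delta>) + log 2 (real n * card (UNIV :: 'x set) + 1) + 1"
proof -
  have "0 < real n * card (UNIV :: 'x set) + 1" by (intro add_nonneg_pos) auto
  then have "0 \<le> log 2 (real n * card (UNIV :: 'x set) + 1)" by simp
  then have "0 \<le> real n * (info_mean + \<delta>) + log 2 (real n * card (UNIV :: 'x set) + 1)"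
    using info_mean_nonneg delta_pos by simp
  then show "real n * (info_mean + \<delta>) + log 2 (real n * card (UNIV :: 'x set) + 1) \<le> index_length n"
    and "index_length n \<le> real n * (info_mean + \<delta>) + log 2 (real n * card (UNIV :: 'x set) + 1) + 1"
    unfolding index_length_def by linarith+
qed

lemma typical_cover_prob_ge:
  assumes "xs \<in> typical n zs"
  shows "2 powr - (real n * (info_mean + \<delta>)) \<le> (\<Prod>t<n. cov (zs!t) (xs!t))"
proof -
  have pos: "\<And>t. t < n \<Longrightarrow> 0 < cov (zs!t) (xs!t)"
    and sum_le: "(\<Sum>t<n. - log 2 (cov (zs!t) (xs!t))) \<le> real n * (info_mean + \<delta>)"
    using assms unfolding typical_def by auto
  have "log 2 (\<Prod>t<n. cov (zs!t) (xs!t)) = (\<Sum>t<n. log 2 (cov (zs!t) (xs!t)))"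
    using pos by (intro log_prod) (auto simp: less_le)
  then have "- (real n * (info_mean + \<delta>)) \<le> log 2 (\<Prod>t<n. cov (zs!t) (xs!t))"
    using sum_le by (simp add: sum_negf)
  then have "2 powr - (real n * (info_mean + \<delta>)) \<le> 2 powr log 2 (\<Prod>t<n. cov (zs!t) (xs!t))"
    by simp
  also have "\<dots> = (\<Prod>t<n. cov (zs!t) (xs!t))"
    using pos by (intro powr_log_cancel prod_pos) auto
  finally show ?thesis .
qed

lemma card_typical_small:
  "real (card (typical n zs)) * exp (- (2 ^ index_length n * 2 powr - (real n * (info_mean + \<delta>)))) < 1"
proof -
  let ?K = "real (card (UNIV :: 'x set))" and ?A = "real n * (info_mean + \<delta>)"
  have "0 < real n * ?K + 1" by (intro add_nonneg_pos) auto
  then have "2 powr ?A * (real n * ?K + 1) = 2 powr (?A + log 2 (real n * ?K + 1))"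
    by (simp add: powr_add)
  also have "\<dots> \<le> 2 ^ index_length n"
    using index_length_bounds(1) by (simp add: powr_realpow[symmetric])
  finally have "(real n * ?K + 1) * (2 powr ?A * 2 powr - ?A) \<le> 2 ^ index_length n * 2 powr - ?A"
    by (simp add: mult_right_mono mult_ac)
  then have codebook_large: "real n * ?K + 1 \<le> 2 ^ index_length n * 2 powr - ?A"
    by (simp flip: powr_add)
  have "card (typical n zs) \<le> card {xs :: 'x list. length xs = n}"
    by (rule card_mono[OF finite_lists_length_UNIV]) (auto simp: typical_def)
  then have "real (card (typical n zs)) \<le> ?K ^ n"
    using card_lists_length_eq[of "UNIV :: 'x set" n] by (simp flip: of_nat_power)
  also have "\<dots> \<le> exp ?K ^ n"
  proof (rule power_mono)
    show "?K \<le> exp ?K" using exp_ge_add_one_self[of ?K] by linarith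
  qed simp
  finally have "real (card (typical n zs)) * exp (- (2 ^ index_length n * 2 powr - ?A))
      \<le> exp (real n * ?K) * exp (- (real n * ?K + 1))"
    using codebook_large by (intro mult_mono) (auto simp: exp_of_nat_mult)
  also have "\<dots> < 1" by (simp flip: exp_add)
  finally show ?thesis .
qed

lemma codebook_exists:
  assumes zs: "length zs = n"
  shows "\<exists>cb. length cb = 2 ^ index_length n \<and>
    (\<forall>j<2 ^ index_length n. length (cb!j) = n \<and>
      (\<forall>t<n. 0 < channel_output (cond_X P g (zs!t)) (Q (zs!t)) (cb!j!t))) \<and>
    (\<forall>xs\<in>typical n zs. \<exists>j<2 ^ index_length n. \<forall>t<n. xs!t \<in> cb!j!t)"
proof (rule random_covering[where \<theta> = "2 powr - (real n * (info_mean + \<delta>))"])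
  show "0 \<le> channel_output (cond_X P g (zs!t)) (Q (zs!t)) W" for t W
    by (rule vertex_distribution.channel_output_nonneg[OF cond_X_distribution admissible])
  show "(\<Sum>W\<in>UNIV. channel_output (cond_X P g (zs!t)) (Q (zs!t)) W) = 1" for t
    by (rule vertex_distribution.sum_channel_output[OF cond_X_distribution admissible])
  show "typical n zs \<subseteq> {xs. length xs = n}" by (auto simp: typical_def)
  show "2 powr - (real n * (info_mean + \<delta>))
      \<le> (\<Prod>t<n. \<Sum>W\<in>{W. xs!t \<in> W}. channel_output (cond_X P g (zs!t)) (Q (zs!t)) W)"
    if "xs \<in> typical n zs" for xs
    using typical_cover_prob_ge[OF that] by (simp add: cover_prob_def)
qed (use card_typical_small in simp)

definition codebook :: "nat \<Rightarrow> 'z list \<Rightarrow> 'x set list list" where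
  "codebook n zs = (SOME cb. length cb = 2 ^ index_length n \<and>
    (\<forall>j<2 ^ index_length n. length (cb!j) = n \<and>
      (\<forall>t<n. 0 < channel_output (cond_X P g (zs!t)) (Q (zs!t)) (cb!j!t))) \<and>
    (\<forall>xs\<in>typical n zs. \<exists>j<2 ^ index_length n. \<forall>t<n. xs!t \<in> cb!j!t))"

definition codeword_index :: "nat \<Rightarrow> 'x list \<Rightarrow> 'z list \<Rightarrow> nat" where
  "codeword_index n xs zs = (LEAST j. j < 2 ^ index_length n \<and> (\<forall>t<n. xs!t \<in> codebook n zs ! j ! t))"

definition block_encoder :: "nat \<Rightarrow> 'x list \<Rightarrow> 'z list \<Rightarrow> bool list" where
  "block_encoder n xs zs =
    (if length zs = n \<and> xs \<in> typical n zs
     then False # fixed_length_code {..<2 ^ index_length n} (index_length n) (codeword_index n xs zs)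
     else True # fixed_length_code {xs. length xs = n} (n * card (UNIV :: 'x set)) xs)"

lemma codeword_index:
  assumes zs: "length zs = n" and xs: "xs \<in> typical n zs"
  shows "codeword_index n xs zs < 2 ^ index_length n"
    and "\<And>t. t < n \<Longrightarrow> xs!t \<in> codebook n zs ! codeword_index n xs zs ! t"
    and "\<And>t. t < n \<Longrightarrow> indep_set (aux_adj P f g (zs!t)) (codebook n zs ! codeword_index n xs zs ! t)"
proof -
  have cb: "length (codebook n zs) = 2 ^ index_length n \<and>
    (\<forall>j<2 ^ index_length n. length (codebook n zs ! j) = n \<and>
      (\<forall>t<n. 0 < channel_output (cond_X P g (zs!t)) (Q (zs!t)) (codebook n zs ! j ! t))) \<and>
    (\<forall>xs\<in>typical n zs. \<exists>j<2 ^ index_length n. \<forall>t<n. xs!t \<in> codebook n zs ! j ! t)"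
    unfolding codebook_def by (rule someI_ex) (rule codebook_exists[OF zs])
  have "codeword_index n xs zs < 2 ^ index_length n \<and>
      (\<forall>t<n. xs!t \<in> codebook n zs ! codeword_index n xs zs ! t)"
    unfolding codeword_index_def by (rule LeastI_ex) (use cb xs in blast)
  then show "codeword_index n xs zs < 2 ^ index_length n"
    and "\<And>t. t < n \<Longrightarrow> xs!t \<in> codebook n zs ! codeword_index n xs zs ! t"
    and "\<And>t. t < n \<Longrightarrow> indep_set (aux_adj P f g (zs!t)) (codebook n zs ! codeword_index n xs zs ! t)"
    using cb vertex_distribution.indep_set_if_channel_output_pos[OF cond_X_distribution admissible]
    by blast+
qed

lemma index_code:
  shows "inj_on (fixed_length_code {..<2 ^ L :: nat} L) {..<2 ^ L}"
    and "j < 2 ^ L \<Longrightarrow> length (fixed_length_code {..<2 ^ L :: nat} L j) = L"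
  using fixed_length_code[of "{..<2 ^ L :: nat}" L] by auto

lemma verbatim_code:
  "inj_on (fixed_length_code {xs :: 'x list. length xs = n} (n * card (UNIV :: 'x set))) {xs. length xs = n}"
  "length xs = n \<Longrightarrow> length (fixed_length_code {xs :: 'x list. length xs = n} (n * card (UNIV :: 'x set)) xs)
    = n * card (UNIV :: 'x set)"
proof -
  have "card (UNIV :: 'x set) ^ n \<le> (2 ^ card (UNIV :: 'x set)) ^ n"
    by (intro power_mono) (auto intro: less_imp_le)
  then have bound: "card {xs :: 'x list. length xs = n} \<le> 2 ^ (n * card (UNIV :: 'x set))"
    using card_lists_length_eq[of "UNIV :: 'x set" n] by (simp add: power_mult[symmetric] mult.commute)
  show "inj_on (fixed_length_code {xs :: 'x list. length xs = n} (n * card (UNIV :: 'x set))) {xs. length xs = n}"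
    by (rule fixed_length_code(1)[OF finite_lists_length_UNIV bound])
  show "length xs = n \<Longrightarrow> length (fixed_length_code {xs :: 'x list. length xs = n} (n * card (UNIV :: 'x set)) xs)
      = n * card (UNIV :: 'x set)"
    by (rule fixed_length_code(2)[OF finite_lists_length_UNIV bound]) simp
qed

lemma length_block_encoder:
  assumes "length xs = n"
  shows "length (block_encoder n xs zs) = (if length zs = n \<and> xs \<in> typical n zs
    then 1 + index_length n else 1 + n * card (UNIV :: 'x set))"
  using codeword_index(1) index_code(2) verbatim_code(2)[OF assms] by (simp add: block_encoder_def)

lemma prefix_free_block_encoder: "prefix_free_encoder n (block_encoder n)"
proof (rule prefix_free_encoder_if_head_determines_length)
  fix xs zs xs' zs' :: "_ list"
  assume "length xs = n" "length zs = n" "length xs' = n" "length zs' = n"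
    "hd (block_encoder n xs zs) = hd (block_encoder n xs' zs')"
  then show "length (block_encoder n xs zs) = length (block_encoder n xs' zs')"
    by (simp add: length_block_encoder) (simp add: block_encoder_def split: if_splits)
qed (simp add: block_encoder_def)

lemma map2_eq_if_same_codeword_index:
  assumes len: "length xs = n" "length xs' = n" "length ys = n"
    and pos: "0 < prob_n P n xs ys" "0 < prob_n P n xs' ys"
    and typical: "xs \<in> typical n (map g ys)" "xs' \<in> typical n (map g ys)"
    and same_index: "codeword_index n xs (map g ys) = codeword_index n xs' (map g ys)"
  shows "map2 f xs ys = map2 f xs' ys"
proof (rule map2_eq_if_covered_by_indep_sets[OF nonneg len pos])
  let ?zs = "map g ys"
  have zs: "length ?zs = n" using len by simp
  fix t assume t: "t < n"
  have "?zs ! t = g (ys!t)" using t len by simp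
  then show "indep_set (aux_adj P f g (g (ys!t))) (codebook n ?zs ! codeword_index n xs ?zs ! t)"
    using codeword_index(3)[OF zs typical(1) t] by simp
  show "xs!t \<in> codebook n ?zs ! codeword_index n xs ?zs ! t"
    by (rule codeword_index(2)[OF zs typical(1) t])
  show "xs'!t \<in> codebook n ?zs ! codeword_index n xs ?zs ! t"
    using codeword_index(2)[OF zs typical(2) t] same_index by simp
qed

lemma decodable_block_encoder: "decodable_encoder P f g n (block_encoder n)"
  unfolding decodable_encoder_def
proof (intro allI impI, elim conjE)
  fix xs xs' ys
  assume len: "length xs = n" "length xs' = n" "length ys = n"
    and pos: "0 < prob_n P n xs ys" "0 < prob_n P n xs' ys"
    and same: "block_encoder n xs (map g ys) = block_encoder n xs' (map g ys)"
  let ?zs = "map g ys" and ?L = "index_length n"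
  have zs: "length ?zs = n" using len by simp
  show "map2 f xs ys = map2 f xs' ys"
  proof (cases "xs \<in> typical n ?zs")
    case True
    then have typical': "xs' \<in> typical n ?zs"
      using same len by (auto simp: block_encoder_def split: if_splits)
    then have "fixed_length_code {..<2 ^ ?L} ?L (codeword_index n xs ?zs)
        = fixed_length_code {..<2 ^ ?L} ?L (codeword_index n xs' ?zs)"
      using same True zs by (simp add: block_encoder_def)
    moreover have "codeword_index n xs ?zs \<in> {..<2 ^ ?L}" "codeword_index n xs' ?zs \<in> {..<2 ^ ?L}"
      using codeword_index(1)[OF zs] True typical' by auto
    ultimately have "codeword_index n xs ?zs = codeword_index n xs' ?zs"
      by (rule inj_onD[OF index_code(1)])
    then show ?thesis by (rule map2_eq_if_same_codeword_index[OF len pos True typical'])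
  next
    case False
    then have "xs' \<notin> typical n ?zs"
      using same len by (auto simp: block_encoder_def split: if_splits)
    then have "fixed_length_code {xs. length xs = n} (n * card (UNIV :: 'x set)) xs
        = fixed_length_code {xs. length xs = n} (n * card (UNIV :: 'x set)) xs'"
      using same False by (simp add: block_encoder_def)
    then have "xs = xs'" using len by (intro inj_onD[OF verbatim_code(1)]) auto
    then show ?thesis by simp
  qed
qed

definition rate_bound :: "nat \<Rightarrow> real" where
  "rate_bound n = info_mean + \<delta> + (2 + log 2 (real n * card (UNIV :: 'x set) + 1)) / real n
     + card (UNIV :: 'x set) * info_var / (real n * \<delta>\<^sup>2)"

lemma code_rate_block_encoder:
  assumes n: "0 < n"
  shows "code_rate P g n (block_encoder n) \<le> rate_bound n"
proof -
  let ?K = "card (UNIV :: 'x set)" and ?L = "index_length n"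
  have "code_rate P g n (block_encoder n)
      \<le> (real (1 + ?L) + real (n * ?K) * (info_var / (real n * \<delta>\<^sup>2))) / real n"
    by (rule code_rate_le_if_length_le[OF nonneg sum1 n _ _ atypical_prob_le[OF n]])
      (auto simp: length_block_encoder)
  also have "\<dots> = (1 + real ?L) / real n + ?K * info_var / (real n * \<delta>\<^sup>2)"
    using n by (simp add: add_divide_distrib)
  also have "(1 + real ?L) / real n
      \<le> (real n * (info_mean + \<delta>) + (2 + log 2 (real n * ?K + 1))) / real n"
    using index_length_bounds(2)[of n] by (intro divide_right_mono) auto
  also have "\<dots> = info_mean + \<delta> + (2 + log 2 (real n * ?K + 1)) / real n"
    using n by (simp add: add_divide_distrib)
  finally show ?thesis unfolding rate_bound_def by simp
qed

lemma rate_bound_tendsto: "rate_bound \<longlonglongrightarrow> info_mean + \<delta>"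
proof -
  let ?K = "real (card (UNIV :: 'x set))"
  have "rate_bound = (\<lambda>n. info_mean + \<delta> + 2 * inverse (real n)
      + log 2 (real n * ?K + 1) / real n + ?K * info_var / \<delta>\<^sup>2 * inverse (real n))"
    by (simp add: rate_bound_def fun_eq_iff add_divide_distrib divide_inverse ac_simps distrib_left)
  moreover have "\<dots> \<longlonglongrightarrow> info_mean + \<delta> + 2 * 0 + 0 + ?K * info_var / \<delta>\<^sup>2 * 0"
    by (intro tendsto_intros lim_inverse_n log_linear_over_n_tendsto_0) simp
  ultimately show ?thesis by simp
qed

lemma achievable_above_info_mean:
  assumes "info_mean + \<delta> < R"
  shows "achievable P f g R"
  by (rule achievable_if_rates_bounded[OF sum1 _ rate_bound_tendsto assms, where enc = block_encoder])
    (simp add: prefix_free_block_encoder decodable_block_encoder code_rate_block_encoder)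

end

lemma korner_sum_le_if_achievable:
  fixes P :: "'x::finite \<Rightarrow> 'y::finite \<Rightarrow> real" and f :: "'x \<Rightarrow> 'y \<Rightarrow> 'u" and g :: "'y \<Rightarrow> 'z::finite"
  assumes nonneg: "\<And>x y. 0 \<le> P x y"
    and sum1: "(\<Sum>x\<in>UNIV. \<Sum>y\<in>UNIV. P x y) = 1"
    and pairwise: "\<And>z x x'. \<exists>y. g y = z \<and> 0 < P x y * P x' y"
    and achievable: "achievable P f g R"
  shows "(\<Sum>z\<in>UNIV. pgY P g z * korner_entropy (cond_X P g z) (aux_adj P f g z)) \<le> R"
proof -
  obtain enc dec where codes: "\<forall>n\<ge>1. zero_error_code P f g n (enc n) (dec n)"
    and rates: "(\<lambda>n. code_rate P g n (enc n)) \<longlonglongrightarrow> R"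
    using achievable unfolding achievable_def by blast
  show ?thesis
    using codes korner_sum_le_code_rate[OF nonneg sum1 pairwise]
    by (intro LIMSEQ_le_const[OF rates]) blast
qed

lemma achievable_near_korner_sum:
  fixes P :: "'x::finite \<Rightarrow> 'y::finite \<Rightarrow> real" and f :: "'x \<Rightarrow> 'y \<Rightarrow> 'u" and g :: "'y \<Rightarrow> 'z::finite"
  assumes nonneg: "\<And>x y. 0 \<le> P x y"
    and sum1: "(\<Sum>x\<in>UNIV. \<Sum>y\<in>UNIV. P x y) = 1"
    and pairwise: "\<And>z x x'. \<exists>y. g y = z \<and> 0 < P x y * P x' y"
    and e: "0 < e"
  shows "\<exists>R. achievable P f g R \<and>
    R < (\<Sum>z\<in>UNIV. pgY P g z * korner_entropy (cond_X P g z) (aux_adj P f g z)) + e"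
proof -
  define K where "K z = korner_entropy (cond_X P g z) (aux_adj P f g z)" for z
  have pgY_pos: "0 < pgY P g z" for z by (rule pgY_pos_if_pairwise[OF nonneg pairwise])
  have "\<exists>Q. admissible_channel (cond_X P g z) (aux_adj P f g z) Q \<and>
      mutual_info (cond_X P g z) Q < K z + e / 4" for z
    unfolding K_def using e
    by (intro vertex_distribution.exists_channel_near_korner_entropy
        vertex_distribution_cond_X[OF nonneg pgY_pos]) (auto simp: aux_adj_def)
  then obtain Q where Q: "\<And>z. admissible_channel (cond_X P g z) (aux_adj P f g z) (Q z)"
    "\<And>z. mutual_info (cond_X P g z) (Q z) < K z + e / 4"
    by metis
  interpret achievability_setting P f g Q "e / 4"
    by unfold_locales (use nonneg sum1 pairwise Q(1) e in auto)
  have "info_mean \<le> (\<Sum>z\<in>UNIV. pgY P g z * mutual_info (cond_X P g z) (Q z))"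
    by (rule info_mean_le)
  also have "\<dots> \<le> (\<Sum>z\<in>UNIV. pgY P g z * (K z + e / 4))"
    using Q(2) pgY_pos by (intro sum_mono mult_left_mono) (auto intro: less_imp_le)
  also have "\<dots> = (\<Sum>z\<in>UNIV. pgY P g z * K z) + (\<Sum>z\<in>UNIV. pgY P g z) * (e / 4)"
    by (simp add: distrib_left sum.distrib sum_distrib_right)
  also have "\<dots> = (\<Sum>z\<in>UNIV. pgY P g z * K z) + e / 4"
    by (simp add: sum_pgY[OF nonneg sum1])
  finally have "info_mean + e / 4 < (\<Sum>z\<in>UNIV. pgY P g z * K z) + 3 * e / 4"
    using e by simp
  then have "achievable P f g ((\<Sum>z\<in>UNIV. pgY P g z * K z) + 3 * e / 4)"
    by (rule achievable_above_info_mean)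
  then show ?thesis unfolding K_def using e by (intro exI[of _ "_ + 3 * e / 4"]) auto
qed

theorem theorem2:
  fixes P :: "'x::finite \<Rightarrow> 'y::finite \<Rightarrow> real"
    and f :: "'x \<Rightarrow> 'y \<Rightarrow> 'u::finite"
    and g :: "'y \<Rightarrow> 'z::finite"
  assumes nonneg: "\<And>x y. 0 \<le> P x y"
    and sum1: "(\<Sum>x\<in>UNIV. \<Sum>y\<in>UNIV. P x y) = 1"
    and fullX: "\<And>x. 0 < (\<Sum>y\<in>UNIV. P x y)"
    and fullY: "\<And>y. 0 < (\<Sum>x\<in>UNIV. P x y)"
    and pairwise: "\<And>z x x'. \<exists>y. g y = z \<and> 0 < P x y * P x' y"
  shows "opt_rate P f g = (\<Sum>z\<in>UNIV. pgY P g z * korner_entropy (cond_X P g z) (aux_adj P f g z))"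
proof -
  define H where "H = (\<Sum>z\<in>UNIV. pgY P g z * korner_entropy (cond_X P g z) (aux_adj P f g z))"
  have lower: "H \<le> R" if "achievable P f g R" for R
    unfolding H_def by (rule korner_sum_le_if_achievable[OF nonneg sum1 pairwise that])
  have upper: "\<exists>R. achievable P f g R \<and> R < H + e" if "0 < e" for e
    unfolding H_def by (rule achievable_near_korner_sum[OF nonneg sum1 pairwise that])
  have "Inf {R. achievable P f g R} = H"
  proof (rule cInf_eq_non_empty)
    show "{R. achievable P f g R} \<noteq> {}" using upper[of 1] by auto
  next
    fix y assume "\<And>R. R \<in> {R. achievable P f g R} \<Longrightarrow> y \<le> R"
    then show "y \<le> H" using upper[of "y - H"] by force
  qed (use lower in auto)
  then show ?thesis unfolding opt_rate_def H_def .
qed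

end
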